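(* Let $n\ge3$, $1\le k\le n$, $c_0>0$, and let $u\in C^2(\overline{\mathbb{R}^n_+})$ be positive with $\sigma_k(A^u)=2^k\binom nk$, $g_u\in\Gamma_k^+$ in $\overline{\mathbb{R}^n_+}$ and $\mathcal{B}_k^{g_u}=c_0$ on $\partial\mathbb{R}^n_+$. Then for every $x\in\partial\mathbb{R}^n_+$ there exists $\lambda_0(x)>0$ such that $$u_{x,\lambda}\le u\quad\text{on }\overline{\mathbb{R}^n_+}\setminus B_\lambda(x)\quad\text{for all }0<\lambda<\lambda_0(x).$$ In particular $\bar\lambda(x)>0$.
   Context: For $x\in\partial\mathbb{R}^n_+$ and $\lambda>0$, $u_{x,\lambda}(y):=\big(\frac{\lambda}{|y-x|}\big)^{n-2}u\big(x+\frac{\lambda^2(y-x)}{|y-x|^2}\big)$ (Kelvin transform w.r.t. $\partial B_\lambda(x)$), and $\bar\lambda(x):=\sup\{\mu>0: u_{x,\lambda}\le u \text{ in } \overline{\mathbb{R}^n_+}\setminus B_\lambda(x)\ \forall\,0<\lambda<\mu\}$. For positive $C^2$ $u$: $g_u=u^{4/(n-2)}|dx|^2$, $A^u=-\frac{2}{n-2}u^{-\frac{n+2}{n-2}}\nabla^2u+\frac{2n}{(n-2)^2}u^{-\frac{2n}{n-2}}\nabla u\otimes\nabla u-\frac{2}{(n-2)^2}u^{-\frac{2n}{n-2}}|\nabla u|^2I_n$; $\sigma_s$ is the $s$-th elementary symmetric function of eigenvalues; $\Gamma_k^+=\{\lambda:\sigma_1(\lambda)>0,\dots,\sigma_k(\lambda)>0\}$,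 $g_u\in\Gamma_k^+$ meaning eigenvalues of $A^u$ in $\Gamma_k^+$. On $\partial\mathbb{R}^n_+$: $h_{g_u}=-\frac{2}{n-2}u^{-\frac n{n-2}}\partial_{x_n}u$, $A^{\mathrm T}_{g_u}=((A^u)_{\alpha\beta})_{1\le\alpha,\beta\le n-1}$, $\mathcal{B}_k^{g_u}=\frac{(n-1)!}{(n-k)!(2k-1)!!}h_{g_u}^{2k-1}+\sum_{s=1}^{k-1}\frac{(n-1-s)!}{(n-k)!(2k-2s-1)!!}\sigma_s(A^{\mathrm T}_{g_u})h_{g_u}^{2k-2s-1}$. *)

theory Defs
  imports "HOL-Analysis.Analysis"
begin

fun dfact :: "nat \<Rightarrow> nat" where
  "dfact 0 = 1"
| "dfact (Suc 0) = 1"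
| "dfact (Suc (Suc m)) = Suc (Suc m) * dfact m"

definition half_space :: "'n \<Rightarrow> (real^'n) set" where
  "half_space N = {x. x $ N \<ge> 0}"

definition bdry_half_space :: "'n \<Rightarrow> (real^'n) set" where
  "bdry_half_space N = {x. x $ N = 0}"

definition C2_on :: "(real^'n) set \<Rightarrow> (real^'n \<Rightarrow> real) \<Rightarrow> (real^'n \<Rightarrow> real^'n)
      \<Rightarrow> (real^'n \<Rightarrow> real^'n^'n) \<Rightarrow> bool" where
  "C2_on H u Du D2u \<longleftrightarrow>
     (\<forall>x\<in>H. (u has_derivative (\<lambda>h. Du x \<bullet> h)) (at x within H)
          \<and> (Du has_derivative (\<lambda>h. D2u x *v h)) (at x within H))
     \<and> continuous_on H D2u"

definition A_u :: "(real^'n \<Rightarrow> real) \<Rightarrow> (real^'n \<Rightarrow> real^'n)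
      \<Rightarrow> (real^'n \<Rightarrow> real^'n^'n) \<Rightarrow> real^'n \<Rightarrow> real^'n^'n" where
  "A_u u Du D2u x =
     (let n = real CARD('n) in
      \<chi> i j. - (2 / (n - 2)) * u x powr (- (n + 2) / (n - 2)) * (D2u x $ i $ j)
             + (2 * n / (n - 2)\<^sup>2) * u x powr (- 2 * n / (n - 2)) * (Du x $ i) * (Du x $ j)
             - (2 / (n - 2)\<^sup>2) * u x powr (- 2 * n / (n - 2)) * (norm (Du x))\<^sup>2
                 * (if i = j then 1 else 0))"

(* lam (restricted to the index set I) is the family of eigenvalues of the
   symmetric matrix (A i j)_{i,j in I}: A = P diag(lam) P^T with P orthogonal on I *)
definition eig_on :: "'n set \<Rightarrow> ('n \<Rightarrow> 'n \<Rightarrow> real) \<Rightarrow> ('n \<Rightarrow> real) \<Rightarrow> bool" where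
  "eig_on I A lam \<longleftrightarrow>
     (\<exists>P :: 'n \<Rightarrow> 'n \<Rightarrow> real.
        (\<forall>i\<in>I. \<forall>j\<in>I. (\<Sum>l\<in>I. P l i * P l j) = (if i = j then 1 else 0))
      \<and> (\<forall>i\<in>I. \<forall>j\<in>I. A i j = (\<Sum>l\<in>I. P i l * lam l * P j l)))"

definition sigma_on :: "'n set \<Rightarrow> nat \<Rightarrow> ('n \<Rightarrow> real) \<Rightarrow> real" where
  "sigma_on I s lam = (\<Sum>S\<in>{S. S \<subseteq> I \<and> card S = s}. \<Prod>i\<in>S. lam i)"

definition Gamma_plus :: "'n set \<Rightarrow> nat \<Rightarrow> ('n \<Rightarrow> real) \<Rightarrow> bool" where
  "Gamma_plus I k lam \<longleftrightarrow> (\<forall>j\<in>{1..k}. sigma_on I j lam > 0)"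

definition h_u :: "'n \<Rightarrow> (real^'n \<Rightarrow> real) \<Rightarrow> (real^'n \<Rightarrow> real^'n) \<Rightarrow> real^'n \<Rightarrow> real" where
  "h_u N u Du x = (let n = real CARD('n) in
      - (2 / (n - 2)) * u x powr (- n / (n - 2)) * (Du x $ N))"

(* boundary operator B_k, given the eigenvalues lamT of the tangential block A^T *)
definition B_k :: "nat \<Rightarrow> 'n set \<Rightarrow> ('n \<Rightarrow> real) \<Rightarrow> real \<Rightarrow> real" where
  "B_k k T lamT h = (let n = CARD('n) in
      real (fact (n - 1)) / (real (fact (n - k)) * real (dfact (2 * k - 1))) * h ^ (2 * k - 1)
    + (\<Sum>s = 1..k - 1. real (fact (n - 1 - s)) / (real (fact (n - k)) * real (dfact (2 * k - 2 * s - 1)))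
                        * sigma_on T s lamT * h ^ (2 * k - 2 * s - 1)))"

definition kelvin :: "(real^'n \<Rightarrow> real) \<Rightarrow> real^'n \<Rightarrow> real \<Rightarrow> real^'n \<Rightarrow> real" where
  "kelvin u x lam y =
     (lam / norm (y - x)) ^ (CARD('n) - 2) * u (x + (lam\<^sup>2 / (norm (y - x))\<^sup>2) *\<^sub>R (y - x))"

definition lambda_bar :: "'n \<Rightarrow> (real^'n \<Rightarrow> real) \<Rightarrow> real^'n \<Rightarrow> ereal" where
  "lambda_bar N u x = Sup (ereal ` {mu. mu > 0 \<and>
      (\<forall>lam. 0 < lam \<and> lam < mu \<longrightarrow>
         (\<forall>y\<in>half_space N. dist y x \<ge> lam \<longrightarrow> kelvin u x lam y \<le> u y))})"

end

(*
  Since g_u lies in Gamma_k^+, sigma_1(A^u) > 0, and the trace of A^u is a negative multiple of the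
  Laplacian, so u is superharmonic.  On the boundary, the characteristic polynomial of the
  tangential block A^T is a convex combination of the polynomials prod_{l ~= m} (1 + t lambda_l);
  by Newton's inequalities the eigenvalues with one of them deleted stay in Gamma_{k-1}^+, so
  sigma_s(A^T) >= 0 for s < k and B_k = c_0 > 0 forces h > 0, i.e. du/dx_n < 0.
  Comparison with the fundamental solution on large half annuli then gives
  u(y) >= m (r_0 / |y - x|)^(n-2) away from x: a negative minimum of the difference could lie
  neither in the interior (superharmonicity) nor on the flat boundary (sign of du/dx_n).
  Near x, u is bounded below and Lipschitz, which absorbs the factor (lambda / |y - x|)^(n-2)
  of the Kelvin transform.
*)

theory Submission
  imports Defs "HOL-Library.Quadratic_Discriminant"
begin

section \<open>Elementary symmetric functions\<close>

lemma sigma_on_0: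
  assumes "finite L"
  shows "sigma_on L 0 lam = 1"
proof -
  have "{S. S \<subseteq> L \<and> card S = 0} = {{}}"
    using assms by (auto dest: finite_subset)
  then show ?thesis unfolding sigma_on_def by simp
qed

lemma sigma_on_eq_0_if_card_less:
  assumes "finite L" "card L < s"
  shows "sigma_on L s lam = 0"
proof -
  have "card S \<noteq> s" if "S \<subseteq> L" for S
    using card_mono[OF assms(1) that] assms(2) by linarith
  then have empty: "{S. S \<subseteq> L \<and> card S = s} = {}" by blast
  show ?thesis unfolding sigma_on_def empty by simp
qed

lemma subsets_card_Suc_insert:
  assumes "finite L" "a \<notin> L"
  shows "{S. S \<subseteq> insert a L \<and> card S = Suc s}
       = {S. S \<subseteq> L \<and> card S = Suc s} \<union> insert a ` {S. S \<subseteq> L \<and> card S = s}"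
proof (intro equalityI subsetI)
  fix S assume S: "S \<in> {S. S \<subseteq> insert a L \<and> card S = Suc s}"
  then have "finite S" using assms(1) finite_subset by auto
  show "S \<in> {S. S \<subseteq> L \<and> card S = Suc s} \<union> insert a ` {S. S \<subseteq> L \<and> card S = s}"
  proof (cases "a \<in> S")
    case True
    then have "S = insert a (S - {a})" "S - {a} \<subseteq> L" "card (S - {a}) = s"
      using S \<open>finite S\<close> by auto
    then show ?thesis by blast
  qed (use S in auto)
next
  fix S assume "S \<in> {S. S \<subseteq> L \<and> card S = Suc s} \<union> insert a ` {S. S \<subseteq> L \<and> card S = s}"
  then show "S \<in> {S. S \<subseteq> insert a L \<and> card S = Suc s}"
    using assms by (auto simp: card_insert_if finite_subset)
qed

lemma sigma_on_insert_Suc: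
  assumes "finite L" "a \<notin> L"
  shows "sigma_on (insert a L) (Suc s) lam = sigma_on L (Suc s) lam + lam a * sigma_on L s lam"
proof -
  let ?A = "{S. S \<subseteq> L \<and> card S = Suc s}" and ?C = "{S. S \<subseteq> L \<and> card S = s}"
  have fin: "finite ?A" "finite ?C" using assms(1) by auto
  have "inj_on (insert a) ?C"
    using assms(2) by (auto simp: inj_on_def)
  moreover have "prod lam (insert a S) = lam a * prod lam S" if "S \<in> ?C" for S
    using that assms by (auto intro: prod.insert finite_subset)
  ultimately have "sum (prod lam) (insert a ` ?C) = (\<Sum>S\<in>?C. lam a * prod lam S)"
    by (simp add: sum.reindex)
  moreover have "?A \<inter> insert a ` ?C = {}" using assms(2) by blast
  ultimately show ?thesis
    unfolding sigma_on_def subsets_card_Suc_insert[OF assms]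
    by (simp add: sum.union_disjoint fin sum_distrib_left)
qed

lemma prod_one_plus_eq_sum_sigma_on:
  assumes "finite L" "card L \<le> M"
  shows "(\<Prod>l\<in>L. 1 + x * lam l) = (\<Sum>s\<le>M. sigma_on L s lam * x ^ s)"
  using assms
proof (induction L arbitrary: M rule: finite_induct)
  case empty
  have "sigma_on {} s lam * x ^ s = (if s = 0 then 1 else 0)" for s
    by (cases s) (simp_all add: sigma_on_0 sigma_on_eq_0_if_card_less)
  then show ?case by simp
next
  case (insert a L)
  then obtain M' where M: "M = Suc M'" "card L \<le> M'" by (cases M) auto
  have top: "sigma_on L (Suc M') lam = 0"
    using insert.hyps(1) M(2) by (simp add: sigma_on_eq_0_if_card_less)
  have "(\<Prod>l\<in>insert a L. 1 + x * lam l) = (1 + x * lam a) * (\<Sum>s\<le>M'. sigma_on L s lam * x ^ s)"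
    using insert.hyps insert.IH[OF M(2)] by simp
  also have "\<dots> = (\<Sum>s\<le>M'. sigma_on L s lam * x ^ s) + (\<Sum>s\<le>M'. lam a * sigma_on L s lam * x ^ Suc s)"
    by (simp add: algebra_simps sum.distrib sum_distrib_left)
  also have "(\<Sum>s\<le>M'. sigma_on L s lam * x ^ s) = (\<Sum>s\<le>M. sigma_on L s lam * x ^ s)"
    using top unfolding M(1) by simp
  also have "\<dots> + (\<Sum>s\<le>M'. lam a * sigma_on L s lam * x ^ Suc s)
      = (\<Sum>s\<le>M. sigma_on (insert a L) s lam * x ^ s)"
    using insert.hyps unfolding M(1) sum.atMost_Suc_shift
    by (simp add: sigma_on_0 sigma_on_insert_Suc sum.distrib algebra_simps)
  finally show ?case .
qed

lemma sigma_on_1: "finite L \<Longrightarrow> sigma_on L 1 lam = (\<Sum>l\<in>L. lam l)"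
  by (induction L rule: finite_induct)
    (simp_all add: sigma_on_eq_0_if_card_less sigma_on_0 sigma_on_insert_Suc[where s = 0, simplified])

section \<open>Newton's inequalities\<close>

definition polyfun :: "(nat \<Rightarrow> real) \<Rightarrow> nat \<Rightarrow> real \<Rightarrow> real" where
  "polyfun c m x = (\<Sum>i\<le>m. c i * x ^ i)"

definition deriv_coeffs :: "(nat \<Rightarrow> real) \<Rightarrow> nat \<Rightarrow> real" where
  "deriv_coeffs c i = real (Suc i) * c (Suc i)"

definition has_distinct_zeros :: "(real \<Rightarrow> real) \<Rightarrow> nat \<Rightarrow> bool" where
  "has_distinct_zeros f d \<longleftrightarrow> (\<exists>S. finite S \<and> card S = d \<and> (\<forall>s\<in>S. f s = 0))"

lemma polyfun_has_real_derivative: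
  "(polyfun c (Suc m) has_real_derivative polyfun (deriv_coeffs c) m x) (at x)"
proof -
  have "((\<lambda>x. \<Sum>i\<le>Suc m. c i * x ^ i) has_real_derivative (\<Sum>i\<le>Suc m. c i * (real i * x ^ (i - Suc 0)))) (at x)"
    by (intro DERIV_sum DERIV_cmult DERIV_pow)
  moreover have "(\<Sum>i\<le>Suc m. c i * (real i * x ^ (i - Suc 0))) = polyfun (deriv_coeffs c) m x"
    unfolding sum.atMost_Suc_shift polyfun_def deriv_coeffs_def by (simp add: algebra_simps)
  ultimately show ?thesis unfolding polyfun_def[abs_def] by simp
qed

lemma Rolle_distinct_zeros:
  fixes f f' :: "real \<Rightarrow> real"
  assumes der: "\<And>x. (f has_real_derivative f' x) (at x)"
  shows "finite S \<Longrightarrow> card S = Suc d \<Longrightarrow> (\<forall>s\<in>S. f s = 0) \<Longrightarrow>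
     \<exists>T. finite T \<and> card T = d \<and> (\<forall>t\<in>T. f' t = 0) \<and> (\<forall>t\<in>T. t < Max S)"
proof (induction d arbitrary: S)
  case 0
  then show ?case by (intro exI[of _ "{}"]) auto
next
  case (Suc d)
  define a where "a = Max S"
  define S' where "S' = S - {a}"
  have aS: "a \<in> S" unfolding a_def using Suc.prems by (intro Max_in) auto
  have S': "finite S'" "card S' = Suc d" unfolding S'_def using Suc.prems aS by auto
  obtain T' where T': "finite T'" "card T' = d" "\<forall>t\<in>T'. f' t = 0" "\<forall>t\<in>T'. t < Max S'"
    using Suc.IH[OF S'] Suc.prems(3) unfolding S'_def by auto
  define b where "b = Max S'"
  have bS': "b \<in> S'" unfolding b_def using S' by (intro Max_in) auto
  then have ba: "b < a" using Suc.prems(1) unfolding S'_def a_def by (simp add: order_le_neq_trans)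
  have "f a = 0" "f b = 0" using Suc.prems(3) aS bS' unfolding S'_def by auto
  moreover have "continuous_on {b..a} f"
    using der by (meson DERIV_continuous continuous_at_imp_continuous_on)
  moreover have "f differentiable (at x)" for x using der real_differentiable_def by blast
  ultimately obtain z where z: "b < z" "z < a" "(f has_real_derivative 0) (at z)"
    using Rolle[OF ba] by metis
  have "f' z = 0" using DERIV_unique[OF der z(3)] .
  moreover have "z \<notin> T'" using T'(4) z(1) unfolding b_def by force
  ultimately show ?case
    using T' z ba unfolding a_def b_def by (intro exI[of _ "insert z T'"]) auto
qed

lemma has_distinct_zeros_deriv:
  assumes "has_distinct_zeros f (Suc d)" "\<And>x. (f has_real_derivative f' x) (at x)"
  shows "has_distinct_zeros f' d"
  using assms Rolle_distinct_zeros[of f f'] unfolding has_distinct_zeros_def by metis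

lemma deriv_coeffs_iterate: "(deriv_coeffs ^^ r) c i = c (i + r) * fact (i + r) / fact i"
proof (induction r arbitrary: i)
  case (Suc r)
  have "(deriv_coeffs ^^ Suc r) c i = real (Suc i) * (deriv_coeffs ^^ r) c (Suc i)"
    by (simp add: deriv_coeffs_def)
  also have "\<dots> = real (Suc i) * (c (Suc i + r) * fact (Suc i + r) / fact (Suc i))"
    using Suc by simp
  also have "\<dots> = c (i + Suc r) * fact (i + Suc r) / fact i"
    by (simp add: fact_Suc field_simps del: of_nat_Suc)
  finally show ?case .
qed simp

lemma has_distinct_zeros_polyfun_deriv_iterate:
  "has_distinct_zeros (polyfun c m) (d + r) \<Longrightarrow> r \<le> m
    \<Longrightarrow> has_distinct_zeros (polyfun ((deriv_coeffs ^^ r) c) (m - r)) d"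
proof (induction r arbitrary: d)
  case (Suc r)
  have "m - r = Suc (m - Suc r)" using Suc.prems by simp
  then have "has_distinct_zeros (polyfun ((deriv_coeffs ^^ r) c) (Suc (m - Suc r))) (Suc d)"
    using Suc.IH[of "Suc d"] Suc.prems by simp
  then show ?case
    by (simp add: has_distinct_zeros_deriv polyfun_has_real_derivative)
qed simp

text \<open>Reversing the coefficients gives \<open>x\<^sup>m p(1/x)\<close>, whose zeros are the reciprocals.\<close>

lemma has_distinct_zeros_polyfun_reverse:
  assumes "has_distinct_zeros (polyfun c m) d" "c 0 \<noteq> 0"
  shows "has_distinct_zeros (polyfun (\<lambda>i. c (m - i)) m) d"
proof -
  obtain S where S: "finite S" "card S = d" "\<forall>s\<in>S. polyfun c m s = 0"
    using assms(1) unfolding has_distinct_zeros_def by auto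
  have "polyfun c m 0 = c 0" unfolding polyfun_def sum.atMost_shift by simp
  then have S0: "0 \<notin> S" using S(3) assms(2) by auto
  have "polyfun (\<lambda>i. c (m - i)) m (1 / s) = 0" if "s \<in> S" for s
  proof -
    have "s ^ m * polyfun (\<lambda>i. c (m - i)) m (1 / s) = (\<Sum>i\<le>m. c (m - i) * s ^ (m - i))"
      unfolding polyfun_def sum_distrib_left
    proof (rule sum.cong)
      fix i assume "i \<in> {..m}"
      then have "s ^ m = s ^ (m - i) * s ^ i" by (simp flip: power_add)
      then show "s ^ m * (c (m - i) * (1 / s) ^ i) = c (m - i) * s ^ (m - i)"
        using S0 that by (auto simp: power_one_over field_simps)
    qed simp
    also have "\<dots> = polyfun c m s"
      unfolding polyfun_def atMost_atLeast0 by (rule sum.atLeastAtMost_rev[of _ 0 m, simplified, symmetric])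
    moreover have "s \<noteq> 0" using S0 that by auto
    ultimately show ?thesis using S(3) that by simp
  qed
  moreover have "inj_on (\<lambda>s. 1 / s) S" by (auto simp: inj_on_def)
  ultimately show ?thesis
    using S unfolding has_distinct_zeros_def by (intro exI[of _ "(\<lambda>s. 1 / s) ` S"]) (auto simp: card_image)
qed

lemma discrim_pos_if_distinct_zeros:
  assumes "has_distinct_zeros (polyfun c 2) 2" "c 2 \<noteq> 0"
  shows "discrim (c 2) (c 1) (c 0) > 0"
proof -
  obtain r1 r2 where r: "r1 \<noteq> r2" "polyfun c 2 r1 = 0" "polyfun c 2 r2 = 0"
    using assms(1) unfolding has_distinct_zeros_def by (auto simp: card_2_iff)
  have root: "c 2 * r\<^sup>2 + c 1 * r + c 0 = 0" if "polyfun c 2 r = 0" for r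
    using that unfolding polyfun_def by (simp add: numeral_2_eq_2 power2_eq_square algebra_simps)
  show ?thesis
  proof (rule ccontr)
    assume "\<not> ?thesis"
    then consider "discrim (c 2) (c 1) (c 0) < 0" | "discrim (c 2) (c 1) (c 0) = 0" by linarith
    then show False
      using root[OF r(2)] root[OF r(3)] r(1) assms(2) discriminant_negative discriminant_zero
      by cases metis+
  qed
qed

text \<open>Newton's inequality in coefficient form for a polynomial of degree \<open>j + 2 + e\<close> with only real
  zeros: differentiating \<open>j\<close> times, reversing and differentiating \<open>e\<close> more times leaves a quadratic
  with two real zeros.\<close>

lemma newton_real_rooted_coeffs:
  assumes zeros: "has_distinct_zeros (polyfun c (j + 2 + e)) (j + 2 + e)" and cj: "c j \<noteq> 0"
  shows "c j * c (j + 2) * ((real j + 2) * (real e + 2)) < (c (Suc j))\<^sup>2 * ((real j + 1) * (real e + 1))"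
proof -
  define c1 where "c1 = (deriv_coeffs ^^ j) c"
  have c1: "c1 i = c (i + j) * fact (i + j) / fact i" for i
    unfolding c1_def by (rule deriv_coeffs_iterate)
  have "has_distinct_zeros (polyfun c1 (e + 2)) (e + 2)"
    using has_distinct_zeros_polyfun_deriv_iterate[of c "j + 2 + e" "e + 2" j] zeros
    unfolding c1_def by (simp add: ac_simps)
  then have "has_distinct_zeros (polyfun (\<lambda>i. c1 (e + 2 - i)) (e + 2)) (e + 2)"
    using cj c1[of 0] by (intro has_distinct_zeros_polyfun_reverse) auto
  moreover define c3 where "c3 = (deriv_coeffs ^^ e) (\<lambda>i. c1 (e + 2 - i))"
  ultimately have "has_distinct_zeros (polyfun c3 2) 2"
    using has_distinct_zeros_polyfun_deriv_iterate[of _ "e + 2" 2 e] by (simp add: ac_simps)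
  moreover have c3: "c3 i = c1 (e + 2 - (i + e)) * fact (i + e) / fact i" for i
    unfolding c3_def by (rule deriv_coeffs_iterate)
  moreover have c30: "c3 0 = c (j + 2) * fact (j + 2) / 2 * fact e"
    using c3[of 0] c1[of 2] by (simp add: numeral_2_eq_2 add.commute)
  moreover have c31: "c3 1 = c (Suc j) * fact (Suc j) * fact (Suc e)"
    using c3[of 1] c1[of 1] by (simp add: add.commute)
  moreover have c32: "c3 2 = c j * fact j * fact (e + 2) / 2"
    using c3[of 2] c1[of 0] by (simp add: numeral_2_eq_2)
  moreover have "c3 2 \<noteq> 0" unfolding c32 using cj by simp
  ultimately have "4 * c3 2 * c3 0 < (c3 1)\<^sup>2"
    using discrim_pos_if_distinct_zeros unfolding discrim_def by force
  moreover define K where "K = (real j + 1) * (real e + 1) * (fact j * fact e)\<^sup>2"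
  moreover have "(c3 1)\<^sup>2 = (c (Suc j))\<^sup>2 * ((real j + 1) * (real e + 1)) * K"
    unfolding c31 K_def by (simp add: fact_Suc algebra_simps power2_eq_square)
  moreover have "4 * c3 2 * c3 0 = c j * c (j + 2) * ((real j + 2) * (real e + 2)) * K"
  proof -
    have fact_plus_2: "(fact (i + 2) :: real) = (real i + 2) * (real i + 1) * fact i" for i
      by (simp add: numeral_2_eq_2 fact_Suc algebra_simps)
    show ?thesis unfolding c30 c32 K_def fact_plus_2 by (simp add: power2_eq_square)
  qed
  moreover have "K > 0" unfolding K_def by simp
  ultimately show ?thesis by simp
qed

lemma has_distinct_zeros_polyfun_sigma_on:
  assumes fin: "finite L" and inj: "inj_on lam L" and nz: "\<forall>l\<in>L. lam l \<noteq> 0"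
  shows "has_distinct_zeros (polyfun (\<lambda>s. sigma_on L s lam) (card L)) (card L)"
  unfolding has_distinct_zeros_def
proof (intro exI[of _ "(\<lambda>l. - 1 / lam l) ` L"] conjI ballI)
  have "inj_on (\<lambda>l. - 1 / lam l) L" using inj nz by (auto simp: inj_on_def)
  then show "card ((\<lambda>l. - 1 / lam l) ` L) = card L" by (rule card_image)
  fix s assume "s \<in> (\<lambda>l. - 1 / lam l) ` L"
  then obtain a where a: "a \<in> L" "1 + s * lam a = 0" using nz by auto
  have "polyfun (\<lambda>s. sigma_on L s lam) (card L) s = (\<Prod>l\<in>L. 1 + s * lam l)"
    unfolding polyfun_def using prod_one_plus_eq_sum_sigma_on[OF fin order_refl] by simp
  also have "\<dots> = 0" using a fin by (intro prod_zero) auto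
  finally show "polyfun (\<lambda>s. sigma_on L s lam) (card L) s = 0" .
qed (use fin in simp)

lemma newton_inequality_distinct:
  assumes fin: "finite L" and inj: "inj_on lam L" and nz: "\<forall>l\<in>L. lam l \<noteq> 0" and j: "1 \<le> j"
  shows "sigma_on L (j - 1) lam * sigma_on L (j + 1) lam \<le> (sigma_on L j lam)\<^sup>2"
proof (cases "sigma_on L (j - 1) lam * sigma_on L (j + 1) lam \<le> 0")
  case True
  then show ?thesis by (meson order_trans zero_le_power2)
next
  case False
  define \<sigma> where "\<sigma> = (\<lambda>s. sigma_on L s lam)"
  obtain i where i: "j = Suc i" using j by (cases j) auto
  have pos: "\<sigma> i * \<sigma> (i + 2) > 0" using False unfolding \<sigma>_def i by simp
  then have "i + 2 \<le> card L"
    using fin sigma_on_eq_0_if_card_less[of L "i + 2" lam] unfolding \<sigma>_def by fastforce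
  then obtain e where e: "card L = i + 2 + e" by (metis le_add_diff_inverse)
  have "\<sigma> i * \<sigma> (i + 2) * ((real i + 2) * (real e + 2)) < (\<sigma> (Suc i))\<^sup>2 * ((real i + 1) * (real e + 1))"
    using has_distinct_zeros_polyfun_sigma_on[OF fin inj nz] pos
    unfolding \<sigma>_def e by (intro newton_real_rooted_coeffs) auto
  moreover have "\<sigma> i * \<sigma> (i + 2) * ((real i + 1) * (real e + 1)) \<le> \<sigma> i * \<sigma> (i + 2) * ((real i + 2) * (real e + 2))"
    using pos by (intro mult_left_mono mult_mono) auto
  ultimately have "\<sigma> i * \<sigma> (i + 2) * ((real i + 1) * (real e + 1)) < (\<sigma> (Suc i))\<^sup>2 * ((real i + 1) * (real e + 1))"
    by linarith
  then show ?thesis unfolding \<sigma>_def i by (simp add: mult_less_cancel_right numeral_2_eq_2 less_imp_le)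
qed

lemma eventually_at_0_affine_ne_0:
  fixes a b :: real
  assumes "a \<noteq> 0 \<or> b \<noteq> 0"
  shows "\<forall>\<^sub>F \<epsilon> in at 0. a + \<epsilon> * b \<noteq> 0"
proof (cases "a = 0")
  case True
  then show ?thesis using assms by (auto simp: eventually_at_filter)
next
  case False
  have "((\<lambda>\<epsilon>. a + \<epsilon> * b) \<longlongrightarrow> a) (at 0)" by (auto intro!: tendsto_eq_intros)
  then show ?thesis using False by (rule tendsto_imp_eventually_ne)
qed

text \<open>The general case follows by continuity from a perturbation with distinct nonzero entries.\<close>

lemma newton_inequality:
  assumes fin: "finite L" and j: "1 \<le> j"
  shows "sigma_on L (j - 1) lam * sigma_on L (j + 1) lam \<le> (sigma_on L j lam)\<^sup>2"
proof -
  obtain g :: "'a \<Rightarrow> nat" where g: "inj_on g L"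
    using finite_imp_inj_to_nat_seg[OF fin] by blast
  define lam\<epsilon> where "lam\<epsilon> = (\<lambda>\<epsilon> l. lam l + \<epsilon> * real (Suc (g l)))"
  define F where "F = (\<lambda>\<epsilon>. (sigma_on L j (lam\<epsilon> \<epsilon>))\<^sup>2
                          - sigma_on L (j - 1) (lam\<epsilon> \<epsilon>) * sigma_on L (j + 1) (lam\<epsilon> \<epsilon>))"
  have "\<forall>\<^sub>F \<epsilon> in at 0. a \<noteq> b \<longrightarrow> lam\<epsilon> \<epsilon> a \<noteq> lam\<epsilon> \<epsilon> b" if "a \<in> L" "b \<in> L" for a b
  proof (cases "a = b")
    case False
    then show ?thesis
      using eventually_at_0_affine_ne_0[of "lam a - lam b" "real (Suc (g a)) - real (Suc (g b))"] g that
      unfolding lam\<epsilon>_def inj_on_def by (auto simp: algebra_simps)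
  qed simp
  then have "\<forall>\<^sub>F \<epsilon> in at 0. \<forall>a\<in>L. \<forall>b\<in>L. a \<noteq> b \<longrightarrow> lam\<epsilon> \<epsilon> a \<noteq> lam\<epsilon> \<epsilon> b"
    using fin by (simp add: eventually_ball_finite_distrib)
  then have "\<forall>\<^sub>F \<epsilon> in at 0. inj_on (lam\<epsilon> \<epsilon>) L"
    unfolding inj_on_def by (rule eventually_mono) blast
  moreover have "\<forall>\<^sub>F \<epsilon> in at 0. \<forall>l\<in>L. lam\<epsilon> \<epsilon> l \<noteq> 0"
    using fin eventually_at_0_affine_ne_0 unfolding lam\<epsilon>_def by (auto intro!: eventually_ball_finite)
  ultimately have "\<forall>\<^sub>F \<epsilon> in at 0. 0 \<le> F \<epsilon>"
    by eventually_elim (use newton_inequality_distinct[OF fin _ _ j] in \<open>simp add: F_def\<close>)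
  moreover have "isCont F 0"
    unfolding F_def lam\<epsilon>_def sigma_on_def by (intro continuous_intros)
  ultimately have "0 \<le> F 0"
    by (intro tendsto_lowerbound[of F "F 0" "at 0"]) (auto simp: isCont_def)
  moreover have "lam\<epsilon> 0 = lam" unfolding lam\<epsilon>_def by auto
  ultimately show ?thesis unfolding F_def by simp
qed

text \<open>Deleting \<open>\<lambda>\<^sub>i\<close> maps \<open>\<Gamma>\<^sub>k\<^sup>+\<close> into \<open>\<Gamma>\<^sub>k\<^sub>-\<^sub>1\<^sup>+\<close>: by \<open>\<sigma>\<^sub>s(\<lambda>) = \<sigma>\<^sub>s(\<lambda>|i) + \<lambda>\<^sub>i \<sigma>\<^sub>s\<^sub>-\<^sub>1(\<lambda>|i)\<close>, a first
  nonpositive \<open>\<sigma>\<^sub>m\<^sub>+\<^sub>1(\<lambda>|i)\<close> would contradict Newton's inequality at \<open>m + 1\<close>.\<close>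

lemma sigma_on_remove_pos:
  assumes fin: "finite L" and i: "i \<in> L" and gam: "Gamma_plus L k lam" and m: "m \<le> k - 1"
  shows "sigma_on (L - {i}) m lam > 0"
  using m
proof (induction m)
  case 0
  then show ?case using fin by (simp add: sigma_on_0)
next
  case (Suc m)
  define L' where "L' = L - {i}"
  have L': "finite L'" "i \<notin> L'" "L = insert i L'" using fin i unfolding L'_def by auto
  define a b c where "a = sigma_on L' m lam" and "b = sigma_on L' (Suc m) lam"
    and "c = sigma_on L' (Suc (Suc m)) lam"
  have a: "a > 0" using Suc unfolding a_def L'_def by simp
  have "0 < sigma_on L (Suc m) lam" "0 < sigma_on L (Suc (Suc m)) lam"
    using gam Suc.prems unfolding Gamma_plus_def by auto
  then have h1: "b + lam i * a > 0" and h2: "c + lam i * b > 0"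
    unfolding L'(3) a_def b_def c_def using sigma_on_insert_Suc[OF L'(1,2)] by auto
  have "a * c \<le> b\<^sup>2" using newton_inequality[OF L'(1), of "Suc m" lam] unfolding a_def b_def c_def by simp
  show ?case
  proof (rule ccontr)
    assume "\<not> ?case"
    then have "b \<le> 0" unfolding b_def L'_def by simp
    then have "b\<^sup>2 \<le> - lam i * a * b"
      using mult_nonneg_nonpos[OF less_imp_le[OF h1] \<open>b \<le> 0\<close>] by (simp add: algebra_simps power2_eq_square)
    also have "\<dots> < a * c" using mult_pos_pos[OF a h2] by (simp add: algebra_simps)
    finally show False using \<open>a * c \<le> b\<^sup>2\<close> by simp
  qed
qed

section \<open>Principal submatrices of symmetric matrices\<close>

definition diag_mat :: "('n::finite \<Rightarrow> 'a::zero) \<Rightarrow> 'a^'n^'n" where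
  "diag_mat d = (\<chi> i j. if i = j then d i else 0)"

lemma orthogonal_conj_diag_nth:
  fixes Q :: "'a::comm_semiring_1^'n::finite^'n"
  shows "(Q ** diag_mat d ** transpose Q) $ i $ j = (\<Sum>l\<in>UNIV. Q $ i $ l * d l * Q $ j $ l)"
  by (simp add: diag_mat_def matrix_matrix_mult_def transpose_def if_distrib if_distribR sum.If_cases)

lemma orthogonal_matrix_entries:
  assumes "orthogonal_matrix Q"
  shows "(\<Sum>l\<in>UNIV. Q $ i $ l * Q $ j $ l) = (if i = j then 1 else 0)"
proof -
  have "(Q ** transpose Q) $ i $ j = mat 1 $ i $ j" using assms unfolding orthogonal_matrix_def by simp
  then show ?thesis by (simp add: matrix_matrix_mult_def transpose_def mat_def)
qed

lemma det_orthogonal_conj_diag: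
  fixes Q :: "real^'n::finite^'n"
  assumes "orthogonal_matrix Q"
  shows "det (Q ** diag_mat d ** transpose Q) = (\<Prod>l\<in>UNIV. d l)"
proof -
  have "det (diag_mat d) = (\<Prod>l\<in>UNIV. d l)"
    unfolding diag_mat_def by (subst det_diagonal) auto
  moreover have "det Q * det Q = 1" using det_orthogonal_matrix[OF assms] by auto
  ultimately show ?thesis by (simp add: det_mul)
qed

lemma orthogonal_conj_diag_mult:
  fixes Q :: "real^'n::finite^'n"
  assumes "orthogonal_matrix Q"
  shows "(Q ** diag_mat d ** transpose Q) ** (Q ** diag_mat e ** transpose Q)
       = Q ** diag_mat (\<lambda>l. d l * e l) ** transpose Q"
proof -
  have "(Q ** diag_mat d ** transpose Q) ** (Q ** diag_mat e ** transpose Q)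
      = Q ** diag_mat d ** (transpose Q ** Q) ** diag_mat e ** transpose Q"
    by (simp add: matrix_mul_assoc)
  also have "\<dots> = Q ** (diag_mat d ** diag_mat e) ** transpose Q"
    using assms unfolding orthogonal_matrix_def by (simp add: matrix_mul_assoc)
  also have "diag_mat d ** diag_mat e = diag_mat (\<lambda>l. d l * e l)"
    by (simp add: diag_mat_def matrix_matrix_mult_def vec_eq_iff if_distrib if_distribR sum.If_cases)
  finally show ?thesis .
qed

lemma mat_1_plus_orthogonal_conj_diag:
  fixes Q :: "real^'n::finite^'n"
  assumes "orthogonal_matrix Q"
  shows "mat 1 + t *\<^sub>R (Q ** diag_mat d ** transpose Q) = Q ** diag_mat (\<lambda>l. 1 + t * d l) ** transpose Q"
  using orthogonal_matrix_entries[OF assms]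
  by (simp add: vec_eq_iff orthogonal_conj_diag_nth mat_def algebra_simps sum.distrib sum_distrib_left)

lemma eig_on_imp_orthogonal_conj_diag:
  fixes A :: "'n::finite \<Rightarrow> 'n \<Rightarrow> real"
  assumes "eig_on I A lam"
  shows "\<exists>Q. orthogonal_matrix Q \<and>
    (\<chi> i j. if i \<in> I \<and> j \<in> I then A i j else 0) = Q ** diag_mat (\<lambda>l. if l \<in> I then lam l else 0) ** transpose Q"
proof -
  obtain P where P: "\<forall>i\<in>I. \<forall>j\<in>I. (\<Sum>l\<in>I. P l i * P l j) = (if i = j then 1 else 0)"
    and PA: "\<forall>i\<in>I. \<forall>j\<in>I. A i j = (\<Sum>l\<in>I. P i l * lam l * P j l)"
    using assms unfolding eig_on_def by blast
  define Q :: "real^'n^'n" where "Q = (\<chi> i j. if i \<in> I \<and> j \<in> I then P i j else if i = j then 1 else 0)"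
  have split: "(\<Sum>l\<in>UNIV. f l) = (\<Sum>l\<in>I. f l) + (\<Sum>l\<in>-I. f l)" for f :: "'n \<Rightarrow> real"
    by (simp add: sum.subset_diff[of I UNIV f] Compl_eq_Diff_UNIV add.commute)
  have "transpose Q ** Q = mat 1"
  proof -
    have "(\<Sum>l\<in>UNIV. Q $ l $ i * Q $ l $ j) = (if i = j then 1 else 0)" for i j
      using P by (cases "i \<in> I"; cases "j \<in> I") (auto simp: split Q_def if_distrib if_distribR sum.If_cases)
    then show ?thesis by (simp add: vec_eq_iff matrix_matrix_mult_def transpose_def mat_def)
  qed
  then have orth: "orthogonal_matrix Q"
    unfolding orthogonal_matrix_def using matrix_left_right_inverse by blast
  have "(if i \<in> I \<and> j \<in> I then A i j else 0)
      = (\<Sum>l\<in>UNIV. Q $ i $ l * (if l \<in> I then lam l else 0) * Q $ j $ l)" for i j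
    using PA by (cases "i \<in> I"; cases "j \<in> I") (auto simp: split Q_def if_distrib if_distribR sum.If_cases)
  then show ?thesis using orth by (intro exI[of _ Q]) (simp add: vec_eq_iff orthogonal_conj_diag_nth)
qed

lemma eig_on_UNIV_imp_orthogonal_conj_diag:
  fixes A :: "'n::finite \<Rightarrow> 'n \<Rightarrow> real"
  assumes "eig_on UNIV A lam"
  shows "\<exists>Q. orthogonal_matrix Q \<and> (\<chi> i j. A i j) = Q ** diag_mat lam ** transpose Q"
  using eig_on_imp_orthogonal_conj_diag[OF assms] by simp

lemma det_add_row_multiples:
  fixes R :: "'a::field^'n::finite^'n"
  assumes "c N = 0"
  shows "det (\<chi> i. row i R + c i *s row N R) = det R"
proof -
  define RS where "RS = (\<lambda>S. (\<chi> i. if i \<in> S then row i R + c i *s row N R else row i R) :: 'a^'n^'n)"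
  have "det (RS S) = det R" if "finite S" "S \<subseteq> - {N}" for S
    using that
  proof (induction S rule: finite_induct)
    case empty
    then show ?case unfolding RS_def by (simp add: row_def vec_eq_iff)
  next
    case (insert a S)
    have rows: "row N (RS S) = row N R" "row a (RS S) = row a R"
      using insert unfolding RS_def by (auto simp: row_def vec_eq_iff)
    have "RS (insert a S) = (\<chi> k. if k = a then row a (RS S) + c a *s row N (RS S) else row k (RS S))"
      unfolding rows unfolding RS_def by (simp add: row_def vec_eq_iff)
    moreover have "c a *s row N (RS S) \<in> vec.span {row j (RS S) |j. j \<noteq> a}"
      using insert by (intro vec.span_scale vec.span_base) auto
    ultimately have "det (RS (insert a S)) = det (RS S)" by (simp add: det_row_span)
    then show ?case using insert by simp
  qed
  moreover have "(\<chi> i. row i R + c i *s row N R) = RS (- {N})"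
    unfolding RS_def using assms by (simp add: vec_eq_iff)
  ultimately show ?thesis by simp
qed

text \<open>The principal minor of \<open>B\<close> complementary to \<open>N\<close> is \<open>(B\<inverse>)\<^sub>N\<^sub>N det B\<close>: replace row \<open>N\<close> of
  \<open>B\<close> by the \<open>N\<close>-th unit vector, written as a combination of the rows of \<open>B\<close> (Cramer), then clear
  column \<open>N\<close> by row operations.\<close>

lemma det_principal_minor:
  fixes B C :: "'a::field^'n::finite^'n"
  assumes "C ** B = mat 1"
  shows "det (\<chi> i j. if i = N \<or> j = N then (if i = j then 1 else 0) else B $ i $ j) = C $ N $ N * det B"
proof -
  define R where "R = (\<chi> i. if i = N then (\<Sum>l\<in>UNIV. row N C $ l *s row l B) else row i B)"
  have "det R = C $ N $ N * det B"
    using cramer_lemma_transpose[of N "row N C" B] unfolding R_def by (simp add: row_def)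
  moreover have "(\<Sum>l\<in>UNIV. row N C $ l *s row l B) = axis N 1"
    using assms by (simp add: vec_eq_iff matrix_matrix_mult_def mat_def row_def axis_def)
  then have "(\<chi> i j. if i = N \<or> j = N then (if i = j then 1 else 0) else B $ i $ j)
      = (\<chi> i. row i R + (if i = N then 0 else - B $ i $ N) *s row N R)"
    unfolding R_def by (auto simp: vec_eq_iff row_def axis_def)
  ultimately show ?thesis using det_add_row_multiples[of "\<lambda>i. if i = N then 0 else - B $ i $ N" N R] by simp
qed

lemma orthogonal_conj_diag_1:
  fixes Q :: "real^'n::finite^'n"
  assumes "orthogonal_matrix Q"
  shows "Q ** diag_mat (\<lambda>l. 1) ** transpose Q = mat 1"
proof -
  have "diag_mat (\<lambda>l. 1) = (mat 1 :: real^'n^'n)" by (simp add: diag_mat_def mat_def)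
  then show ?thesis using assms by (simp add: orthogonal_matrix_def)
qed

text \<open>The left-hand side is \<open>det (1 + t A')\<close> for the block \<open>A'\<close> of \<open>A\<close> complementary to \<open>N\<close>: the
  principal minor of \<open>1 + t A\<close>, which equals \<open>((1 + t A)\<inverse>)\<^sub>N\<^sub>N det (1 + t A)\<close>.\<close>

lemma prod_eigenvalues_remove_row_col:
  fixes Q :: "real^'n::finite^'n" and A :: "'n \<Rightarrow> 'n \<Rightarrow> real"
  assumes Q: "orthogonal_matrix Q" and A: "(\<chi> i j. A i j) = Q ** diag_mat lam ** transpose Q"
    and mu: "eig_on (UNIV - {N}) A mu" and t: "\<forall>l. 1 + t * lam l \<noteq> 0"
  shows "(\<Prod>l\<in>UNIV - {N}. 1 + t * mu l) = (\<Sum>m\<in>UNIV. (Q $ N $ m)\<^sup>2 * (\<Prod>l\<in>UNIV - {m}. 1 + t * lam l))"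
proof -
  define B where "B = mat 1 + t *\<^sub>R (\<chi> i j. A i j)"
  define C where "C = Q ** diag_mat (\<lambda>l. 1 / (1 + t * lam l)) ** transpose Q"
  have B: "B = Q ** diag_mat (\<lambda>l. 1 + t * lam l) ** transpose Q"
    unfolding B_def A by (rule mat_1_plus_orthogonal_conj_diag[OF Q])
  have "C ** B = mat 1"
    unfolding B C_def orthogonal_conj_diag_mult[OF Q] using t orthogonal_conj_diag_1[OF Q] by simp
  moreover obtain Q' where Q': "orthogonal_matrix Q'"
    "(\<chi> i j. if i \<in> UNIV - {N} \<and> j \<in> UNIV - {N} then A i j else 0)
       = Q' ** diag_mat (\<lambda>l. if l \<in> UNIV - {N} then mu l else 0) ** transpose Q'"
    using eig_on_imp_orthogonal_conj_diag[OF mu] by blast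
  moreover have "(\<chi> i j. if i = N \<or> j = N then (if i = j then 1 else 0) else B $ i $ j)
      = mat 1 + t *\<^sub>R (\<chi> i j. if i \<in> UNIV - {N} \<and> j \<in> UNIV - {N} then A i j else 0)"
    by (auto simp: vec_eq_iff B_def mat_def)
  ultimately have "(\<Prod>l\<in>UNIV. 1 + t * (if l \<in> UNIV - {N} then mu l else 0)) = C $ N $ N * det B"
    using det_principal_minor[of C B N] mat_1_plus_orthogonal_conj_diag[OF Q'(1)]
      det_orthogonal_conj_diag[OF Q'(1)] by simp
  moreover have "(\<Prod>l\<in>UNIV. 1 + t * (if l \<in> UNIV - {N} then mu l else 0)) = (\<Prod>l\<in>UNIV - {N}. 1 + t * mu l)"
    by (auto simp: prod.remove[of UNIV N] intro!: prod.cong)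
  moreover have "C $ N $ N * det B = (\<Sum>m\<in>UNIV. (Q $ N $ m)\<^sup>2 * (\<Prod>l\<in>UNIV - {m}. 1 + t * lam l))"
  proof -
    have "C $ N $ N * det B = (\<Sum>m\<in>UNIV. (Q $ N $ m)\<^sup>2 / (1 + t * lam m) * (\<Prod>l\<in>UNIV. 1 + t * lam l))"
      unfolding C_def B orthogonal_conj_diag_nth det_orthogonal_conj_diag[OF Q]
      by (simp add: sum_distrib_right power2_eq_square)
    also have "\<dots> = (\<Sum>m\<in>UNIV. (Q $ N $ m)\<^sup>2 * (\<Prod>l\<in>UNIV - {m}. 1 + t * lam l))"
    proof (intro sum.cong refl)
      fix m
      show "(Q $ N $ m)\<^sup>2 / (1 + t * lam m) * (\<Prod>l\<in>UNIV. 1 + t * lam l)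
          = (Q $ N $ m)\<^sup>2 * (\<Prod>l\<in>UNIV - {m}. 1 + t * lam l)"
        using t by (simp add: prod.remove[of UNIV m])
    qed
    finally show ?thesis .
  qed
  ultimately show ?thesis by simp
qed

lemma sigma_on_remove_row_col:
  fixes Q :: "real^'n::finite^'n" and A :: "'n \<Rightarrow> 'n \<Rightarrow> real"
  assumes Q: "orthogonal_matrix Q" and A: "(\<chi> i j. A i j) = Q ** diag_mat lam ** transpose Q"
    and mu: "eig_on (UNIV - {N}) A mu"
  shows "sigma_on (UNIV - {N}) s mu = (\<Sum>m\<in>UNIV. (Q $ N $ m)\<^sup>2 * sigma_on (UNIV - {m}) s lam)"
proof -
  define M where "M = CARD('n) - 1"
  have card: "card (UNIV - {l::'n}) = M" for l unfolding M_def by (simp add: card_Diff_singleton)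
  define c where "c = (\<lambda>s. sigma_on (UNIV - {N}) s mu - (\<Sum>m\<in>UNIV. (Q $ N $ m)\<^sup>2 * sigma_on (UNIV - {m}) s lam))"
  have "(\<Sum>s\<le>M. c s * t ^ s) = 0" if "t \<notin> range (\<lambda>l. - 1 / lam l)" for t
  proof -
    have t: "1 + t * lam l \<noteq> 0" for l
    proof
      assume "1 + t * lam l = 0"
      then have "t = - 1 / lam l" by (cases "lam l = 0") (auto simp: field_simps)
      then show False using that by auto
    qed
    have gen: "(\<Prod>l\<in>UNIV - {m}. 1 + t * g l) = (\<Sum>s\<le>M. sigma_on (UNIV - {m}) s g * t ^ s)"
      for m and g :: "'n \<Rightarrow> real"
      using prod_one_plus_eq_sum_sigma_on[of "UNIV - {m}" M t g] card by simp
    have "(\<Sum>s\<le>M. sigma_on (UNIV - {N}) s mu * t ^ s) = (\<Prod>l\<in>UNIV - {N}. 1 + t * mu l)"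
      by (rule gen[symmetric])
    also have "\<dots> = (\<Sum>m\<in>UNIV. (Q $ N $ m)\<^sup>2 * (\<Prod>l\<in>UNIV - {m}. 1 + t * lam l))"
      using prod_eigenvalues_remove_row_col[OF Q A mu] t by blast
    also have "\<dots> = (\<Sum>m\<in>UNIV. (Q $ N $ m)\<^sup>2 * (\<Sum>s\<le>M. sigma_on (UNIV - {m}) s lam * t ^ s))"
      by (simp only: gen)
    finally show ?thesis
      unfolding c_def
      by (simp add: algebra_simps sum_subtractf sum_distrib_left sum_distrib_right sum.swap[of _ UNIV "{..M}"])
  qed
  then have "UNIV \<subseteq> range (\<lambda>l. - 1 / lam l) \<union> {t. (\<Sum>s\<le>M. c s * t ^ s) = 0}" by blast
  moreover have "finite (range (\<lambda>l. - 1 / lam l))" by simp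
  ultimately have "infinite {t. (\<Sum>s\<le>M. c s * t ^ s) = 0}"
    using infinite_UNIV_char_0 finite_subset by blast
  then have "\<forall>i\<le>M. c i = 0" using polyfun_finite_roots[of c M] by auto
  moreover have "sigma_on (UNIV - {l}) s lam' = 0" if "M < s" for l and lam' :: "'n \<Rightarrow> real"
    using that card by (intro sigma_on_eq_0_if_card_less) auto
  ultimately show ?thesis unfolding c_def by (cases "s \<le> M") auto
qed

section \<open>Superharmonicity and the sign of the mean curvature\<close>

lemma sigma_on_remove_row_col_nonneg:
  fixes A :: "'n::finite \<Rightarrow> 'n \<Rightarrow> real"
  assumes eig: "eig_on UNIV A lam" and gam: "Gamma_plus UNIV k lam"
    and eigT: "eig_on (UNIV - {N}) A mu" and s: "s \<le> k - 1"
  shows "sigma_on (UNIV - {N}) s mu \<ge> 0"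
proof -
  obtain Q where "orthogonal_matrix Q" "(\<chi> i j. A i j) = Q ** diag_mat lam ** transpose Q"
    using eig_on_UNIV_imp_orthogonal_conj_diag[OF eig] by blast
  then have "sigma_on (UNIV - {N}) s mu = (\<Sum>m\<in>UNIV. (Q $ N $ m)\<^sup>2 * sigma_on (UNIV - {m}) s lam)"
    using eigT by (rule sigma_on_remove_row_col)
  also have "\<dots> \<ge> 0"
    using sigma_on_remove_pos[OF finite_class.finite_UNIV UNIV_I gam s] by (intro sum_nonneg) (simp add: less_imp_le)
  finally show ?thesis .
qed

lemma B_k_nonpos:
  assumes k: "1 \<le> k" and h: "h \<le> 0" and sigma: "\<forall>s\<in>{1..k - 1}. sigma_on T s mu \<ge> 0"
  shows "B_k k T mu h \<le> 0"
proof -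
  have odd_pow: "h ^ (2 * k - 2 * s - 1) \<le> 0" if "s < k" for s
  proof -
    have "odd (2 * k - 2 * s - 1)" using that by presburger
    then show ?thesis using h that by (simp add: power_le_zero_eq)
  qed
  show ?thesis
    unfolding B_k_def Let_def
    using k odd_pow[of 0] sigma odd_pow
    by (intro add_nonpos_nonpos sum_nonpos mult_nonneg_nonpos) auto
qed

lemma trace_eq_sigma_on_1:
  fixes A :: "'n::finite \<Rightarrow> 'n \<Rightarrow> real"
  assumes "eig_on UNIV A lam"
  shows "(\<Sum>i\<in>UNIV. A i i) = sigma_on UNIV 1 lam"
proof -
  obtain Q where Q: "orthogonal_matrix Q" "(\<chi> i j. A i j) = Q ** diag_mat lam ** transpose Q"
    using eig_on_UNIV_imp_orthogonal_conj_diag[OF assms] by blast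
  have "A i i = (\<Sum>l\<in>UNIV. lam l * (Q $ i $ l)\<^sup>2)" for i
    using arg_cong[OF Q(2), of "\<lambda>M. M $ i $ i"]
    by (simp add: orthogonal_conj_diag_nth power2_eq_square mult_ac)
  moreover have "(\<Sum>i\<in>UNIV. (Q $ i $ l)\<^sup>2) = 1" for l
  proof -
    have "(transpose Q ** Q) $ l $ l = 1" using Q(1) unfolding orthogonal_matrix_def by (simp add: mat_def)
    then show ?thesis by (simp add: matrix_matrix_mult_def transpose_def power2_eq_square)
  qed
  ultimately show ?thesis
    unfolding sigma_on_1[OF finite_class.finite_UNIV] by (simp add: sum.swap[of _ UNIV UNIV] flip: sum_distrib_left)
qed

lemma sum_vec_nth_squared:
  fixes v :: "real^'n::finite"
  shows "(\<Sum>i\<in>UNIV. (v $ i)\<^sup>2) = (norm v)\<^sup>2"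
  unfolding dot_square_norm[symmetric] inner_vec_def by (simp add: power2_eq_square)

lemma trace_A_u:
  fixes u :: "real^'n::finite \<Rightarrow> real"
  shows "(\<Sum>i\<in>UNIV. A_u u Du D2u z $ i $ i)
       = - (2 / (real CARD('n) - 2)) * u z powr (- (real CARD('n) + 2) / (real CARD('n) - 2))
           * (\<Sum>i\<in>UNIV. D2u z $ i $ i)"
proof -
  define n where "n = real CARD('n)"
  define a b where "a = - (2 / (n - 2)) * u z powr (- (n + 2) / (n - 2))"
    and "b = (2 / (n - 2)\<^sup>2) * u z powr (- 2 * n / (n - 2))"
  have "A_u u Du D2u z $ i $ i = a * D2u z $ i $ i + n * b * (Du z $ i)\<^sup>2 - b * (norm (Du z))\<^sup>2" for i
    unfolding A_u_def Let_def n_def a_def b_def by (simp add: power2_eq_square)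
  then have "(\<Sum>i\<in>UNIV. A_u u Du D2u z $ i $ i)
      = a * (\<Sum>i\<in>UNIV. D2u z $ i $ i) + n * b * (\<Sum>i\<in>UNIV. (Du z $ i)\<^sup>2) - n * b * (norm (Du z))\<^sup>2"
    by (simp add: sum.distrib sum_subtractf sum_distrib_left n_def)
  then show ?thesis unfolding sum_vec_nth_squared a_def n_def by simp
qed

lemma h_u_pos_if_B_k_pos:
  fixes A :: "'n::finite \<Rightarrow> 'n \<Rightarrow> real"
  assumes k: "1 \<le> k" and eig: "eig_on UNIV A lam" and gam: "Gamma_plus UNIV k lam"
    and eigT: "eig_on (UNIV - {N}) A mu" and B: "B_k k (UNIV - {N}) mu h > 0"
  shows "h > 0"
  using B_k_nonpos[OF k, of h "UNIV - {N}" mu] sigma_on_remove_row_col_nonneg[OF eig gam eigT] B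
  by fastforce

lemma laplacian_neg_if_Gamma_plus:
  fixes u :: "real^'n::finite \<Rightarrow> real"
  assumes n: "CARD('n) \<ge> 3" and k: "1 \<le> k" and u: "u z > 0"
    and eig: "eig_on UNIV (\<lambda>i j. A_u u Du D2u z $ i $ j) lam" and gam: "Gamma_plus UNIV k lam"
  shows "(\<Sum>i\<in>UNIV. D2u z $ i $ i) < 0"
proof -
  define c where "c = 2 / (real CARD('n) - 2) * u z powr (- (real CARD('n) + 2) / (real CARD('n) - 2))"
  have "(\<Sum>i\<in>UNIV. A_u u Du D2u z $ i $ i) > 0"
    using trace_eq_sigma_on_1[OF eig] gam k unfolding Gamma_plus_def by simp
  then have "c * (\<Sum>i\<in>UNIV. D2u z $ i $ i) < 0" unfolding trace_A_u c_def by simp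
  moreover have "c > 0" unfolding c_def using u n by simp
  ultimately show ?thesis by (simp add: mult_less_0_iff)
qed

lemma normal_derivative_neg_if_B_k_pos:
  fixes u :: "real^'n::finite \<Rightarrow> real"
  assumes n: "CARD('n) \<ge> 3" and k: "1 \<le> k" and u: "u z > 0"
    and eig: "eig_on UNIV (\<lambda>i j. A_u u Du D2u z $ i $ j) lam" and gam: "Gamma_plus UNIV k lam"
    and eigT: "eig_on (UNIV - {N}) (\<lambda>i j. A_u u Du D2u z $ i $ j) mu"
    and B: "B_k k (UNIV - {N}) mu (h_u N u Du z) > 0"
  shows "Du z $ N < 0"
proof -
  define c where "c = 2 / (real CARD('n) - 2) * u z powr (- real CARD('n) / (real CARD('n) - 2))"
  have "h_u N u Du z > 0" using h_u_pos_if_B_k_pos[OF k eig gam eigT B] .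
  then have "c * Du z $ N < 0" unfolding h_u_def Let_def c_def by simp
  moreover have "c > 0" unfolding c_def using u n by simp
  ultimately show ?thesis by (simp add: mult_less_0_iff)
qed

section \<open>Comparison with the fundamental solution\<close>

lemma second_derivative_nonneg_at_local_min:
  fixes f f' :: "real \<Rightarrow> real"
  assumes \<epsilon>: "\<epsilon> > 0" and f': "\<forall>t. \<bar>t\<bar> < \<epsilon> \<longrightarrow> (f has_real_derivative f' t) (at t)"
    and f'': "(f' has_real_derivative L) (at 0)" and min: "\<forall>t. \<bar>t\<bar> < \<epsilon> \<longrightarrow> f 0 \<le> f t"
  shows "L \<ge> 0"
proof (rule ccontr)
  assume "\<not> L \<ge> 0"
  have "f' 0 = 0"
    using DERIV_local_min[of f "f' 0" 0 \<epsilon>] f' \<epsilon> min by auto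
  moreover have "((\<lambda>y. (f' y - f' 0) / (y - 0)) \<longlongrightarrow> L) (at 0)"
    using f'' by (simp add: has_field_derivative_iff)
  ultimately have "\<forall>\<^sub>F y in at 0. f' y / y < 0"
    using order_tendstoD(2)[of _ L "at 0" 0] \<open>\<not> L \<ge> 0\<close> by simp
  then obtain \<delta> where \<delta>: "\<delta> > 0" "\<forall>y. y \<noteq> 0 \<and> dist y 0 < \<delta> \<longrightarrow> f' y / y < 0"
    unfolding eventually_at by auto
  define t where "t = min \<epsilon> \<delta> / 2"
  have t: "0 < t" "t < \<epsilon>" "t < \<delta>" unfolding t_def using \<epsilon> \<delta> by auto
  then obtain z where z: "0 < z" "z < t" "f t - f 0 = t * f' z"
    using MVT2[of 0 t f f'] f' by auto
  then have "f' z < 0" using \<delta>(2)[rule_format, of z] t by (auto simp: divide_less_0_iff)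
  then have "t * f' z < 0" using t by (simp add: mult_pos_neg)
  then have "f t < f 0" using z by simp
  moreover have "f 0 \<le> f t" using min t by simp
  ultimately show False by simp
qed

lemma derivative_nonneg_at_left_endpoint_min:
  fixes f :: "real \<Rightarrow> real"
  assumes f': "(f has_real_derivative L) (at 0 within {0..})" and \<epsilon>: "\<epsilon> > 0"
    and min: "\<forall>t. 0 \<le> t \<and> t < \<epsilon> \<longrightarrow> f 0 \<le> f t"
  shows "L \<ge> 0"
proof (rule ccontr)
  assume "\<not> L \<ge> 0"
  moreover have "((\<lambda>y. (f y - f 0) / (y - 0)) \<longlongrightarrow> L) (at 0 within {0..})"
    using f' by (simp add: has_field_derivative_iff)
  ultimately have "\<forall>\<^sub>F y in at 0 within {0..}. (f y - f 0) / y < 0"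
    using order_tendstoD(2)[of _ L "at 0 within {0..}" 0] by simp
  then obtain \<delta> where \<delta>: "\<delta> > 0" "\<forall>y\<in>{0..}. y \<noteq> 0 \<and> dist y 0 < \<delta> \<longrightarrow> (f y - f 0) / y < 0"
    unfolding eventually_at by auto
  define t where "t = min \<epsilon> \<delta> / 2"
  have t: "0 < t" "t < \<epsilon>" "t < \<delta>" unfolding t_def using \<epsilon> \<delta> by auto
  then have "(f t - f 0) / t < 0" using \<delta>(2) by auto
  then have "f t < f 0" using t by (simp add: divide_less_0_iff)
  moreover have "f 0 \<le> f t" using min t by simp
  ultimately show False by simp
qed

lemma has_real_derivative_along_line:
  fixes u :: "real^'n::finite \<Rightarrow> real" and p e Du :: "real^'n"
  assumes du: "(u has_derivative (\<lambda>h. Du \<bullet> h)) (at (p + t *\<^sub>R e) within S)"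
    and line: "(\<lambda>s. p + s *\<^sub>R e) ` T \<subseteq> S"
  shows "((\<lambda>s. u (p + s *\<^sub>R e)) has_real_derivative (Du \<bullet> e)) (at t within T)"
proof -
  have "((\<lambda>s. p + s *\<^sub>R e) has_derivative (\<lambda>h. h *\<^sub>R e)) (at t within T)"
    by (auto intro!: derivative_eq_intros)
  moreover have "(u has_derivative (\<lambda>h. Du \<bullet> h)) (at (p + t *\<^sub>R e) within (\<lambda>s. p + s *\<^sub>R e) ` T)"
    by (rule has_derivative_subset[OF du line])
  ultimately have "((u \<circ> (\<lambda>s. p + s *\<^sub>R e)) has_derivative ((\<lambda>h. Du \<bullet> h) \<circ> (\<lambda>h. h *\<^sub>R e))) (at t within T)"
    by (intro diff_chain_within) simp_all
  moreover have "(\<lambda>h. Du \<bullet> h) \<circ> (\<lambda>h. h *\<^sub>R e) = (*) (Du \<bullet> e)"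
    by (auto simp: fun_eq_iff)
  ultimately show ?thesis unfolding has_field_derivative_def by (simp add: comp_def)
qed

lemma has_real_derivative_partial_along_axis:
  fixes Du :: "real^'n::finite \<Rightarrow> real^'n" and p :: "real^'n"
  assumes "(Du has_derivative (\<lambda>h. D2 *v h)) (at p)"
  shows "((\<lambda>s. Du (p + s *\<^sub>R axis i 1) $ i) has_real_derivative D2 $ i $ i) (at 0)"
proof -
  have "((\<lambda>s. p + s *\<^sub>R axis i 1) has_derivative (\<lambda>h. h *\<^sub>R axis i 1)) (at 0)"
    by (auto intro!: derivative_eq_intros)
  then have "((\<lambda>s. Du (p + s *\<^sub>R axis i 1)) has_derivative (\<lambda>h. D2 *v (h *\<^sub>R axis i 1))) (at 0)"
    using has_derivative_compose assms by fastforce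
  then have "((\<lambda>s. Du (p + s *\<^sub>R axis i 1) $ i) has_derivative (\<lambda>h. (D2 *v (h *\<^sub>R axis i 1)) $ i)) (at 0)"
    by (rule bounded_linear.has_derivative[OF bounded_linear_vec_nth])
  moreover have "(\<lambda>h. (D2 *v (h *\<^sub>R axis i 1)) $ i) = (*) (D2 $ i $ i)"
    by (auto simp: fun_eq_iff matrix_vector_mult_def axis_def if_distrib if_distribR sum.If_cases)
  ultimately show ?thesis unfolding has_field_derivative_def by simp
qed

lemma norm_add_axis_squared:
  fixes v :: "real^'n::finite"
  shows "(norm (v + t *\<^sub>R axis i 1))\<^sup>2 = (norm v)\<^sup>2 + 2 * v $ i * t + t\<^sup>2"
  unfolding dot_square_norm[symmetric]
  by (simp add: inner_add_left inner_add_right inner_axis inner_commute[of "axis i 1"]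
      inner_axis_axis power2_eq_square algebra_simps)

lemma fundamental_solution_along_axis:
  fixes p x :: "real^'n::finite"
  assumes n: "CARD('n) \<ge> 2" and ne: "p + t *\<^sub>R axis i 1 \<noteq> x"
  shows "C / dist (p + t *\<^sub>R axis i 1) x ^ (CARD('n) - 2)
       = C * ((norm (p - x))\<^sup>2 + 2 * (p - x) $ i * t + t\<^sup>2) powr ((2 - real CARD('n)) / 2)"
proof -
  define d where "d = dist (p + t *\<^sub>R axis i 1) x"
  have d: "d > 0" using ne unfolding d_def by simp
  have "(norm (p - x))\<^sup>2 + 2 * (p - x) $ i * t + t\<^sup>2 = d powr 2"
    using norm_add_axis_squared[of "p - x" t i] d unfolding d_def
    by (simp add: dist_norm algebra_simps powr_realpow)
  moreover have "2 * ((2 - real CARD('n)) / 2) = - real (CARD('n) - 2)"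
    using n by (simp add: of_nat_diff)
  then have "(d powr 2) powr ((2 - real CARD('n)) / 2) = d powr (- real (CARD('n) - 2))"
    by (simp only: powr_powr)
  moreover have "\<dots> = 1 / d ^ (CARD('n) - 2)"
    using d by (simp add: powr_minus divide_inverse powr_realpow)
  ultimately show ?thesis unfolding d_def by simp
qed

lemma has_real_derivative_powr_quadratic:
  fixes a b C \<alpha> t :: real
  assumes "a + 2 * b * t + t\<^sup>2 > 0"
  shows "((\<lambda>s. C * (a + 2 * b * s + s\<^sup>2) powr \<alpha>) has_real_derivative
           C * \<alpha> * (2 * b + 2 * t) * (a + 2 * b * t + t\<^sup>2) powr (\<alpha> - 1)) (at t)"
  using assms by (auto intro!: derivative_eq_intros simp: powr_diff field_simps)

lemma has_real_derivative_powr_quadratic_deriv: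
  fixes a b C \<alpha> :: real
  assumes "a > 0"
  shows "((\<lambda>s. C * \<alpha> * (2 * b + 2 * s) * (a + 2 * b * s + s\<^sup>2) powr (\<alpha> - 1)) has_real_derivative
           C * \<alpha> * a powr (\<alpha> - 1) * (2 + 4 * (\<alpha> - 1) * b\<^sup>2 / a)) (at 0)"
proof -
  have pow: "a powr (\<alpha> - 2) = a powr (\<alpha> - 1) / a"
    using assms by (simp add: powr_diff power2_eq_square)
  show ?thesis
    using assms by (auto intro!: derivative_eq_intros simp: pow field_simps power2_eq_square)
qed

text \<open>With \<open>K, c\<close> from the second derivatives of the fundamental solution this is its harmonicity.\<close>

lemma sum_weighted_coordinate_squares:
  fixes v :: "real^'n::finite"
  assumes "v \<noteq> 0"
  shows "(\<Sum>i\<in>UNIV. K * (2 + c * (v $ i)\<^sup>2 / (norm v)\<^sup>2)) = K * (2 * real CARD('n) + c)"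
proof -
  have "(\<Sum>i\<in>UNIV. (v $ i)\<^sup>2 / (norm v)\<^sup>2) = 1"
    using assms by (simp add: sum_vec_nth_squared flip: sum_divide_distrib)
  moreover have "(\<Sum>i\<in>UNIV. K * (2 + c * (v $ i)\<^sup>2 / (norm v)\<^sup>2))
      = 2 * K * real CARD('n) + K * c * (\<Sum>i\<in>UNIV. (v $ i)\<^sup>2 / (norm v)\<^sup>2)"
    by (simp add: sum.distrib sum_distrib_left algebra_simps)
  ultimately show ?thesis by (simp add: algebra_simps)
qed

text \<open>The left-hand side is the second derivative of \<open>C |z - x|\<^sup>2\<^sup>-\<^sup>n\<close> along the \<open>i\<close>-th coordinate line at \<open>p\<close>.\<close>

lemma partial_second_derivative_ge_at_local_min_minus_fundamental_solution:
  fixes u :: "real^'n::finite \<Rightarrow> real" and Du :: "real^'n \<Rightarrow> real^'n" and p x :: "real^'n"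
  assumes n: "CARD('n) \<ge> 2" and \<epsilon>: "0 < \<epsilon>" "\<epsilon> \<le> dist p x"
    and du: "\<forall>z\<in>ball p \<epsilon>. (u has_derivative (\<lambda>h. Du z \<bullet> h)) (at z)"
    and d2u: "(Du has_derivative (\<lambda>h. D2 *v h)) (at p)"
    and min: "\<forall>z\<in>ball p \<epsilon>. u p - C / dist p x ^ (CARD('n) - 2) \<le> u z - C / dist z x ^ (CARD('n) - 2)"
  defines "\<alpha> \<equiv> (2 - real CARD('n)) / 2" and "a \<equiv> (norm (p - x))\<^sup>2"
  shows "C * \<alpha> * a powr (\<alpha> - 1) * (2 + 4 * (\<alpha> - 1) * ((p - x) $ i)\<^sup>2 / a) \<le> D2 $ i $ i"
proof -
  have a: "a > 0" using \<epsilon> unfolding a_def by auto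
  define q where "q = (\<lambda>t. a + 2 * (p - x) $ i * t + t\<^sup>2)"
  have line: "p + t *\<^sub>R axis i 1 \<in> ball p \<epsilon>" "p + t *\<^sub>R axis i 1 \<noteq> x" if "\<bar>t\<bar> < \<epsilon>" for t
    using that \<epsilon> by (auto simp: dist_norm)
  have q: "q t > 0" if "\<bar>t\<bar> < \<epsilon>" for t
  proof -
    have "q t = (norm (p + t *\<^sub>R axis i 1 - x))\<^sup>2"
      using norm_add_axis_squared[of "p - x" t i] unfolding q_def a_def by (simp add: algebra_simps)
    then show ?thesis using line(2)[OF that] by simp
  qed
  have sol: "C / dist (p + t *\<^sub>R axis i 1) x ^ (CARD('n) - 2) = C * q t powr \<alpha>" if "\<bar>t\<bar> < \<epsilon>" for t
    using fundamental_solution_along_axis[OF n line(2)[OF that]] unfolding q_def a_def \<alpha>_def .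
  have d1: "\<forall>t. \<bar>t\<bar> < \<epsilon> \<longrightarrow> ((\<lambda>t. u (p + t *\<^sub>R axis i 1) - C * q t powr \<alpha>) has_real_derivative
      Du (p + t *\<^sub>R axis i 1) $ i - C * \<alpha> * (2 * (p - x) $ i + 2 * t) * q t powr (\<alpha> - 1)) (at t)"
  proof (intro allI impI DERIV_diff)
    fix t assume t: "\<bar>t\<bar> < \<epsilon>"
    show "((\<lambda>t. u (p + t *\<^sub>R axis i 1)) has_real_derivative Du (p + t *\<^sub>R axis i 1) $ i) (at t)"
      using has_real_derivative_along_line[of u "Du (p + t *\<^sub>R axis i 1)" p t "axis i 1" UNIV UNIV]
        du line(1)[OF t] by (simp add: inner_axis)
    show "((\<lambda>t. C * q t powr \<alpha>) has_real_derivative C * \<alpha> * (2 * (p - x) $ i + 2 * t) * q t powr (\<alpha> - 1)) (at t)"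
      using has_real_derivative_powr_quadratic q[OF t] unfolding q_def by blast
  qed
  have d2: "((\<lambda>t. Du (p + t *\<^sub>R axis i 1) $ i - C * \<alpha> * (2 * (p - x) $ i + 2 * t) * q t powr (\<alpha> - 1))
      has_real_derivative D2 $ i $ i - C * \<alpha> * a powr (\<alpha> - 1) * (2 + 4 * (\<alpha> - 1) * ((p - x) $ i)\<^sup>2 / a)) (at 0)"
    using has_real_derivative_partial_along_axis[OF d2u] has_real_derivative_powr_quadratic_deriv[OF a]
    unfolding q_def by (intro DERIV_diff)
  have "u (p + 0 *\<^sub>R axis i 1) - C * q 0 powr \<alpha> \<le> u (p + t *\<^sub>R axis i 1) - C * q t powr \<alpha>"
    if "\<bar>t\<bar> < \<epsilon>" for t
    using min[rule_format, OF line(1)[OF that]] sol[OF that] sol[of 0] \<epsilon>(1) by simp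
  then show ?thesis
    using second_derivative_nonneg_at_local_min[OF \<epsilon>(1) d1 d2] by simp
qed

lemma laplacian_nonneg_at_local_min_minus_fundamental_solution:
  fixes u :: "real^'n::finite \<Rightarrow> real" and Du :: "real^'n \<Rightarrow> real^'n" and p x :: "real^'n"
  assumes n: "CARD('n) \<ge> 2" and \<epsilon>: "0 < \<epsilon>" "\<epsilon> \<le> dist p x"
    and du: "\<forall>z\<in>ball p \<epsilon>. (u has_derivative (\<lambda>h. Du z \<bullet> h)) (at z)"
    and d2u: "(Du has_derivative (\<lambda>h. D2 *v h)) (at p)"
    and min: "\<forall>z\<in>ball p \<epsilon>. u p - C / dist p x ^ (CARD('n) - 2) \<le> u z - C / dist z x ^ (CARD('n) - 2)"
  shows "(\<Sum>i\<in>UNIV. D2 $ i $ i) \<ge> 0"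
proof -
  define \<alpha> where "\<alpha> = (2 - real CARD('n)) / 2"
  define a where "a = (norm (p - x))\<^sup>2"
  define K where "K = (\<lambda>i. C * \<alpha> * a powr (\<alpha> - 1) * (2 + 4 * (\<alpha> - 1) * ((p - x) $ i)\<^sup>2 / a))"
  have "(\<Sum>i\<in>UNIV. K i) \<le> (\<Sum>i\<in>UNIV. D2 $ i $ i)"
    using partial_second_derivative_ge_at_local_min_minus_fundamental_solution[OF assms]
    unfolding K_def \<alpha>_def a_def by (rule sum_mono)
  moreover have "p - x \<noteq> 0" using \<epsilon> by auto
  then have "(\<Sum>i\<in>UNIV. K i) = C * \<alpha> * a powr (\<alpha> - 1) * (2 * real CARD('n) + 4 * (\<alpha> - 1))"
    unfolding K_def a_def by (rule sum_weighted_coordinate_squares)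
  moreover have "2 * real CARD('n) + 4 * (\<alpha> - 1) = 0" unfolding \<alpha>_def by (simp add: field_simps)
  ultimately show ?thesis by simp
qed

lemma normal_derivative_nonneg_at_boundary_local_min_minus_fundamental_solution:
  fixes u :: "real^'n::finite \<Rightarrow> real" and p x Du :: "real^'n"
  assumes n: "CARD('n) \<ge> 2" and \<epsilon>: "0 < \<epsilon>" "\<epsilon> \<le> dist p x" and pN: "p $ N = 0" and xN: "x $ N = 0"
    and du: "(u has_derivative (\<lambda>h. Du \<bullet> h)) (at p within {z. z $ N \<ge> 0})"
    and min: "\<forall>z\<in>{z. z $ N \<ge> 0} \<inter> ball p \<epsilon>.
                u p - C / dist p x ^ (CARD('n) - 2) \<le> u z - C / dist z x ^ (CARD('n) - 2)"
  shows "Du $ N \<ge> 0"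
proof -
  define \<alpha> where "\<alpha> = (2 - real CARD('n)) / 2"
  define a where "a = (norm (p - x))\<^sup>2"
  have a: "a > 0" using \<epsilon> unfolding a_def by auto
  define q where "q = (\<lambda>t. a + 2 * (p - x) $ N * t + t\<^sup>2)"
  have line: "p + t *\<^sub>R axis N 1 \<in> {z. z $ N \<ge> 0} \<inter> ball p \<epsilon>" "p + t *\<^sub>R axis N 1 \<noteq> x"
    if "0 \<le> t" "t < \<epsilon>" for t
    using that \<epsilon> pN by (auto simp: dist_norm)
  have sol: "C / dist (p + t *\<^sub>R axis N 1) x ^ (CARD('n) - 2) = C * q t powr \<alpha>" if "0 \<le> t" "t < \<epsilon>" for t
    using fundamental_solution_along_axis[OF n line(2)[OF that]] unfolding q_def a_def \<alpha>_def .
  have "(\<lambda>s. p + s *\<^sub>R axis N 1) ` {0..} \<subseteq> {z. z $ N \<ge> 0}" using pN by auto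
  then have "((\<lambda>t. u (p + t *\<^sub>R axis N 1)) has_real_derivative Du $ N) (at 0 within {0..})"
    using has_real_derivative_along_line[of u Du p 0 "axis N 1"] du by (simp add: inner_axis)
  moreover have "((\<lambda>t. C * q t powr \<alpha>) has_real_derivative 0) (at 0 within {0..})"
    using has_real_derivative_powr_quadratic[of a "(p - x) $ N" 0 C \<alpha>] a pN xN
    unfolding q_def by (auto intro: has_field_derivative_at_within)
  ultimately have "((\<lambda>t. u (p + t *\<^sub>R axis N 1) - C * q t powr \<alpha>) has_real_derivative Du $ N) (at 0 within {0..})"
    using DERIV_diff by fastforce
  moreover have "u (p + 0 *\<^sub>R axis N 1) - C * q 0 powr \<alpha> \<le> u (p + t *\<^sub>R axis N 1) - C * q t powr \<alpha>"
    if "0 \<le> t" "t < \<epsilon>" for t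
    using min[rule_format, OF line(1)[OF that]] sol[OF that] sol[of 0] \<epsilon>(1) by simp
  ultimately show ?thesis
    by (intro derivative_nonneg_at_left_endpoint_min[OF _ \<epsilon>(1)]) auto
qed

lemma exists_interior_min_on_annulus:
  fixes W :: "real^'n::finite \<Rightarrow> real"
  assumes H: "closed H" and cont: "continuous_on {z\<in>H. r \<le> dist z x \<and> dist z x \<le> R} W"
    and y: "y \<in> H" "r \<le> dist y x" "dist y x \<le> R"
    and spheres: "\<forall>z\<in>H. dist z x = r \<or> dist z x = R \<longrightarrow> W y < W z"
  shows "\<exists>p\<in>H. r < dist p x \<and> dist p x < R \<and> (\<forall>z\<in>H. r \<le> dist z x \<and> dist z x \<le> R \<longrightarrow> W p \<le> W z)"
proof -
  let ?K = "{z\<in>H. r \<le> dist z x \<and> dist z x \<le> R}"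
  have "?K = H \<inter> (cball x R - ball x r)" by (auto simp: dist_commute)
  then have "compact ?K"
    using H by (auto simp: compact_eq_bounded_closed intro!: closed_Int closed_Diff bounded_Int)
  then obtain p where p: "p \<in> ?K" "\<forall>z\<in>?K. W p \<le> W z"
    using continuous_attains_inf[OF _ _ cont] y by blast
  moreover have "dist p x \<noteq> r" "dist p x \<noteq> R"
    using p y spheres by (metis (no_types, lifting) mem_Collect_eq not_le)+
  ultimately show ?thesis by force
qed

lemma no_local_min_minus_fundamental_solution:
  fixes u :: "real^'n::finite \<Rightarrow> real" and Du :: "real^'n \<Rightarrow> real^'n" and D2u :: "real^'n \<Rightarrow> real^'n^'n"
  assumes n: "CARD('n) \<ge> 2"
    and du: "\<forall>z\<in>half_space N. (u has_derivative (\<lambda>h. Du z \<bullet> h)) (at z within half_space N)"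
    and d2u: "\<forall>z\<in>half_space N. (Du has_derivative (\<lambda>h. D2u z *v h)) (at z within half_space N)"
    and lap: "\<forall>z\<in>half_space N. (\<Sum>i\<in>UNIV. D2u z $ i $ i) < 0"
    and neu: "\<forall>z\<in>bdry_half_space N. Du z $ N < 0"
    and x: "x \<in> bdry_half_space N" and p: "p \<in> half_space N" and \<epsilon>: "0 < \<epsilon>" "\<epsilon> \<le> dist p x"
    and min: "\<forall>z\<in>half_space N \<inter> ball p \<epsilon>.
                u p - C / dist p x ^ (CARD('n) - 2) \<le> u z - C / dist z x ^ (CARD('n) - 2)"
  shows False
proof (cases "p $ N > 0")
  case True
  define \<delta> where "\<delta> = min \<epsilon> (p $ N)"
  have \<delta>: "0 < \<delta>" "\<delta> \<le> dist p x" unfolding \<delta>_def using \<epsilon> True by auto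
  have ball: "ball p \<delta> \<subseteq> half_space N \<inter> ball p \<epsilon>"
  proof
    fix z assume z: "z \<in> ball p \<delta>"
    have "p $ N - z $ N \<le> dist p z"
      using component_le_norm_cart[of "p - z" N] by (simp add: dist_norm)
    then show "z \<in> half_space N \<inter> ball p \<epsilon>" using z unfolding \<delta>_def half_space_def by auto
  qed
  have at_within: "at z within half_space N = at z" if "z \<in> ball p \<delta>" for z
  proof (rule at_within_interior)
    show "z \<in> interior (half_space N)" using ball that by (meson interior_maximal le_inf_iff open_ball subsetD)
  qed
  have "(u has_derivative (\<lambda>h. Du z \<bullet> h)) (at z)" if "z \<in> ball p \<delta>" for z
  proof -
    have "z \<in> half_space N" using ball that by auto
    then show ?thesis using du at_within[OF that] by auto
  qed
  moreover have "(Du has_derivative (\<lambda>h. D2u p *v h)) (at p)"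
    using d2u p at_within[of p] \<delta>(1) by auto
  moreover have "\<forall>z\<in>ball p \<delta>. u p - C / dist p x ^ (CARD('n) - 2) \<le> u z - C / dist z x ^ (CARD('n) - 2)"
    using min ball by auto
  ultimately have "(\<Sum>i\<in>UNIV. D2u p $ i $ i) \<ge> 0"
    by (intro laplacian_nonneg_at_local_min_minus_fundamental_solution[OF n \<delta>]) auto
  then show False using lap p by force
next
  case False
  then have "p \<in> bdry_half_space N" using p unfolding half_space_def bdry_half_space_def by simp
  then have "Du p $ N \<ge> 0"
    using x du p min
    by (intro normal_derivative_nonneg_at_boundary_local_min_minus_fundamental_solution[OF n \<epsilon>, of N u])
      (auto simp: half_space_def bdry_half_space_def)
  then show False using neu \<open>p \<in> bdry_half_space N\<close> by force
qed

text \<open>If the bound failed, \<open>u - m r\<^sub>0\<^sup>n\<^sup>-\<^sup>2 |z - x|\<^sup>2\<^sup>-\<^sup>n\<close> would attain a negative minimum inside a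
  large half annulus.\<close>

lemma lower_bound_by_fundamental_solution:
  fixes u :: "real^'n::finite \<Rightarrow> real" and Du :: "real^'n \<Rightarrow> real^'n" and D2u :: "real^'n \<Rightarrow> real^'n^'n"
  assumes n: "CARD('n) \<ge> 3"
    and du: "\<forall>z\<in>half_space N. (u has_derivative (\<lambda>h. Du z \<bullet> h)) (at z within half_space N)"
    and d2u: "\<forall>z\<in>half_space N. (Du has_derivative (\<lambda>h. D2u z *v h)) (at z within half_space N)"
    and pos: "\<forall>z\<in>half_space N. u z > 0"
    and lap: "\<forall>z\<in>half_space N. (\<Sum>i\<in>UNIV. D2u z $ i $ i) < 0"
    and neu: "\<forall>z\<in>bdry_half_space N. Du z $ N < 0"
    and x: "x \<in> bdry_half_space N" and r0: "r0 > 0" and m: "m > 0"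
    and sphere: "\<forall>z\<in>half_space N. dist z x = r0 \<longrightarrow> u z \<ge> m"
    and y: "y \<in> half_space N" "dist y x \<ge> r0"
  shows "u y \<ge> m * r0 ^ (CARD('n) - 2) / dist y x ^ (CARD('n) - 2)"
proof (rule ccontr)
  define H where "H = half_space N"
  define k where "k = CARD('n) - 2"
  define C where "C = m * r0 ^ k"
  have C: "C > 0" unfolding C_def using m r0 by simp
  define W where "W = (\<lambda>z. u z - C / dist z x ^ k)"
  assume "\<not> ?thesis"
  then have "W y < 0" unfolding W_def C_def k_def by simp
  define R where "R = dist y x + C / - W y + 1"
  have "C / - W y > 0" using \<open>W y < 0\<close> C by (intro divide_pos_pos) auto
  then have R: "R \<ge> 1" "dist y x < R" "C / - W y < R"
    unfolding R_def using zero_le_dist[of y x] by linarith+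
  have cont: "continuous_on {z\<in>H. r0 \<le> dist z x \<and> dist z x \<le> R} W"
  proof -
    have "continuous_on H u"
      using du unfolding H_def by (metis continuous_on_eq_continuous_within has_derivative_continuous)
    then show ?thesis
      unfolding W_def using r0 by (intro continuous_intros) (auto elim: continuous_on_subset)
  qed
  have spheres: "W y < W z" if "z \<in> H" "dist z x = r0 \<or> dist z x = R" for z
    using that(2)
  proof
    assume "dist z x = r0"
    moreover have "m \<le> u z" using sphere that(1) \<open>dist z x = r0\<close> unfolding H_def by blast
    moreover have "W z = u z - m" using \<open>dist z x = r0\<close> r0 unfolding W_def C_def by simp
    ultimately show ?thesis using \<open>W y < 0\<close> by simp
  next
    assume "dist z x = R"
    have "C / R ^ k \<le> C / R"
      using R C n unfolding k_def by (intro divide_left_mono) (auto intro: power_increasing[of 1, simplified])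
    also have "\<dots> < - W y" using R C \<open>W y < 0\<close> by (simp add: field_simps)
    finally have "- W y > C / R ^ k" .
    moreover have "u z > 0" using pos that(1) unfolding H_def by blast
    ultimately show ?thesis using \<open>dist z x = R\<close> unfolding W_def by simp
  qed
  have "closed H" unfolding H_def half_space_def by (rule closed_halfspace_component_ge_cart)
  moreover have "y \<in> H" using y(1) unfolding H_def .
  ultimately obtain p where p: "p \<in> H" "r0 < dist p x" "dist p x < R"
    and pmin: "\<forall>z\<in>H. r0 \<le> dist z x \<and> dist z x \<le> R \<longrightarrow> W p \<le> W z"
    using exists_interior_min_on_annulus[OF _ cont _ y(2) less_imp_le[OF R(2)]] spheres by blast
  define \<epsilon> where "\<epsilon> = min (dist p x - r0) (R - dist p x)"
  have \<epsilon>: "0 < \<epsilon>" "\<epsilon> \<le> dist p x" unfolding \<epsilon>_def using p r0 by auto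
  have "\<forall>z\<in>H \<inter> ball p \<epsilon>. W p \<le> W z"
  proof
    fix z assume z: "z \<in> H \<inter> ball p \<epsilon>"
    have "dist z x \<le> dist p z + dist p x" "dist p x \<le> dist p z + dist z x"
      by (metis dist_commute dist_triangle)+
    then show "W p \<le> W z" using pmin z unfolding \<epsilon>_def by auto
  qed
  moreover have "CARD('n) \<ge> 2" using n by simp
  ultimately show False
    using no_local_min_minus_fundamental_solution[OF _ du d2u lap neu x _ \<epsilon>] p(1)
    unfolding W_def H_def k_def by blast
qed

section \<open>The Kelvin transform near a boundary point\<close>

lemma abs_diff_le_if_gradient_bounded:
  fixes u :: "'a::euclidean_space \<Rightarrow> real"
  assumes K: "convex K" and du: "\<forall>z\<in>K. (u has_derivative (\<lambda>h. Du z \<bullet> h)) (at z within K)"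
    and B: "\<forall>z\<in>K. norm (Du z) \<le> B" and ab: "a \<in> K" "b \<in> K"
  shows "\<bar>u a - u b\<bar> \<le> B * norm (a - b)"
proof -
  have "norm (u a - u b) \<le> B * norm (a - b)"
  proof (rule differentiable_bound[OF K _ _ ab])
    fix z assume z: "z \<in> K"
    then show "(u has_derivative (\<lambda>h. Du z \<bullet> h)) (at z within K)" using du by blast
    show "onorm (\<lambda>h. Du z \<bullet> h) \<le> B"
    proof (rule onorm_le)
      fix h
      have "norm (Du z \<bullet> h) \<le> norm (Du z) * norm h" using Cauchy_Schwarz_ineq2 by simp
      also have "\<dots> \<le> B * norm h" using B z by (simp add: mult_right_mono)
      finally show "norm (Du z \<bullet> h) \<le> B * norm h" .
    qed
  qed
  then show ?thesis by simp
qed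

lemma inversion_about_sphere:
  fixes x y :: "real^'n::finite" and lam :: real
  assumes "y \<noteq> x"
  defines "z \<equiv> x + (lam\<^sup>2 / (dist y x)\<^sup>2) *\<^sub>R (y - x)"
  shows "dist z x = lam\<^sup>2 / dist y x"
    and "dist z y = \<bar>1 - (lam / dist y x)\<^sup>2\<bar> * dist y x"
    and "x \<in> bdry_half_space N \<Longrightarrow> y \<in> half_space N \<Longrightarrow> z \<in> half_space N"
proof -
  have d: "dist y x > 0" using assms by simp
  show "dist z x = lam\<^sup>2 / dist y x"
    using d unfolding z_def by (simp add: dist_norm power2_eq_square)
  have "z - y = - ((1 - (lam / dist y x)\<^sup>2) *\<^sub>R (y - x))"
    unfolding z_def by (simp add: algebra_simps power_divide)
  then show "dist z y = \<bar>1 - (lam / dist y x)\<^sup>2\<bar> * dist y x" by (simp add: dist_norm)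
  show "z \<in> half_space N" if "x \<in> bdry_half_space N" "y \<in> half_space N"
    using that unfolding z_def half_space_def bdry_half_space_def by simp
qed

text \<open>Near \<open>x\<close>, where \<open>u\<close> is Lipschitz with \<open>2 B r \<le> m \<le> u\<close>, the factor \<open>\<rho> = \<lambda>/r\<close> of the Kelvin transform
  absorbs the variation of \<open>u\<close> between \<open>y\<close> and its reflection \<open>z\<close>.\<close>

lemma kelvin_estimate_near:
  fixes \<rho> B r m uz uy :: real
  assumes \<rho>: "0 < \<rho>" "\<rho> \<le> 1" and k: "1 \<le> k" and m: "m \<le> uz" and B: "0 \<le> B" "0 \<le> r" "2 * B * r \<le> m"
    and lip: "uz - B * ((1 - \<rho>\<^sup>2) * r) \<le> uy"
  shows "\<rho> ^ k * uz \<le> uy"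
proof -
  have "0 \<le> B * r" using B by simp
  then have "0 \<le> uz" using B m by linarith
  have "\<rho> ^ k \<le> \<rho>" using power_decreasing[of 1 k \<rho>] \<rho> k by simp
  then have "\<rho> ^ k * uz \<le> \<rho> * uz" using \<open>0 \<le> uz\<close> by (rule mult_right_mono)
  moreover have "(1 + \<rho>) * (B * r) \<le> 2 * (B * r)" using \<rho> \<open>0 \<le> B * r\<close> by (intro mult_right_mono) auto
  then have "(1 - \<rho>) * ((1 + \<rho>) * (B * r)) \<le> (1 - \<rho>) * uz"
    using \<rho> B m by (intro mult_left_mono) auto
  moreover have "B * ((1 - \<rho>\<^sup>2) * r) = (1 - \<rho>) * ((1 + \<rho>) * (B * r))"
    by (simp add: algebra_simps power2_eq_square)
  moreover have "uz - (1 - \<rho>) * uz = \<rho> * uz" by (simp add: algebra_simps)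
  ultimately show ?thesis using lip by linarith
qed

lemma kelvin_estimate_far:
  fixes lam r r0 m M uz :: real
  assumes lam: "0 < lam" "lam \<le> r0 * (m / M)" and mM: "0 < m" "m \<le> M" and uz: "0 \<le> uz" "uz \<le> M"
    and r: "0 < r" "0 < r0" and k: "1 \<le> k"
  shows "(lam / r) ^ k * uz \<le> m * r0 ^ k / r ^ k"
proof -
  have "lam ^ k * uz \<le> (r0 * (m / M)) ^ k * M"
    using lam uz by (intro mult_mono power_mono) auto
  also have "\<dots> = r0 ^ k * (m / M) ^ k * M" by (simp only: power_mult_distrib)
  also have "\<dots> \<le> r0 ^ k * (m / M) * M"
    using power_decreasing[of 1 k "m / M"] mM r k by (intro mult_right_mono mult_left_mono) auto
  also have "\<dots> = m * r0 ^ k" using mM by simp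
  finally show ?thesis using r by (simp add: power_divide divide_right_mono)
qed

lemma bounds_on_compact_convex:
  fixes u :: "'a::euclidean_space \<Rightarrow> real"
  assumes K: "compact K" "convex K" "K \<noteq> {}"
    and du: "\<forall>z\<in>K. (u has_derivative (\<lambda>h. Du z \<bullet> h)) (at z within K)"
    and cont: "continuous_on K Du" and pos: "\<forall>z\<in>K. u z > 0"
  shows "\<exists>m M B. 0 < m \<and> m \<le> M \<and> 0 < B \<and> (\<forall>z\<in>K. m \<le> u z \<and> u z \<le> M)
           \<and> (\<forall>a\<in>K. \<forall>b\<in>K. \<bar>u a - u b\<bar> \<le> B * dist a b)"
proof -
  have "continuous_on K u"
    using du by (metis continuous_on_eq_continuous_within has_derivative_continuous)
  then obtain p q where "p \<in> K" "\<forall>z\<in>K. u p \<le> u z" "q \<in> K" "\<forall>z\<in>K. u z \<le> u q"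
    using continuous_attains_inf[OF K(1,3)] continuous_attains_sup[OF K(1,3)] by metis
  moreover obtain B where "B > 0" "\<forall>z\<in>K. norm (Du z) \<le> B"
    using compact_imp_bounded[OF compact_continuous_image[OF cont K(1)]] unfolding bounded_pos by auto
  moreover have "\<bar>u a - u b\<bar> \<le> B * dist a b" if "\<forall>z\<in>K. norm (Du z) \<le> B" "a \<in> K" "b \<in> K" for a b B
    using abs_diff_le_if_gradient_bounded[OF K(2) du that] by (simp add: dist_norm)
  ultimately show ?thesis using pos by (intro exI[of _ "u p"] exI[of _ "u q"] exI[of _ B]) auto
qed

lemma kelvin_le_if_bounds:
  fixes u :: "real^'n::finite \<Rightarrow> real"
  assumes n: "CARD('n) \<ge> 3" and x: "x \<in> bdry_half_space N"
    and bounds: "\<forall>z\<in>half_space N \<inter> cball x 1. m \<le> u z \<and> u z \<le> M"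
    and lip: "\<forall>a\<in>half_space N \<inter> cball x 1. \<forall>b\<in>half_space N \<inter> cball x 1. \<bar>u a - u b\<bar> \<le> B * dist a b"
    and mMB: "0 < m" "m \<le> M" "0 < B" and r0: "0 < r0" "r0 \<le> 1" "2 * B * r0 \<le> m"
    and far: "\<forall>y\<in>half_space N. dist y x \<ge> r0 \<longrightarrow> u y \<ge> m * r0 ^ (CARD('n) - 2) / dist y x ^ (CARD('n) - 2)"
    and lam: "0 < lam" "lam \<le> r0 * (m / M)" and y: "y \<in> half_space N" "lam \<le> dist y x"
  shows "kelvin u x lam y \<le> u y"
proof -
  define k where "k = CARD('n) - 2"
  have k: "1 \<le> k" unfolding k_def using n by simp
  define K where "K = half_space N \<inter> cball x 1"
  define r where "r = dist y x"
  define z where "z = x + (lam\<^sup>2 / r\<^sup>2) *\<^sub>R (y - x)"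
  have r: "0 < r" "lam \<le> r" using lam y unfolding r_def by auto
  then have yx: "y \<noteq> x" unfolding r_def by auto
  have "r0 * (m / M) \<le> r0" using mMB r0 by (intro mult_left_le) auto
  then have lam_r0: "lam \<le> r0" using lam by linarith
  have kelvin: "kelvin u x lam y = (lam / r) ^ k * u z"
    unfolding kelvin_def z_def k_def r_def by (simp add: dist_norm)
  have "dist z x = lam\<^sup>2 / r" using inversion_about_sphere(1)[OF yx] unfolding z_def r_def .
  also have "\<dots> \<le> lam" using r lam by (simp add: power2_eq_square divide_le_eq mult_right_mono)
  finally have "z \<in> K"
    using inversion_about_sphere(3)[OF yx x y(1)] lam_r0 r0 unfolding K_def z_def r_def by (auto simp: dist_commute)
  then have uz: "m \<le> u z" "u z \<le> M" using bounds unfolding K_def by auto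
  show ?thesis
  proof (cases "r \<le> r0")
    case True
    then have "y \<in> K" using y r0 unfolding K_def r_def by (auto simp: dist_commute)
    then have "u z - u y \<le> B * dist z y" using lip \<open>z \<in> K\<close> unfolding K_def by (auto simp: abs_le_iff)
    moreover have "(lam / r)\<^sup>2 \<le> 1" using r lam by (simp add: power_le_one)
    then have "dist z y = (1 - (lam / r)\<^sup>2) * r"
      using inversion_about_sphere(2)[OF yx] unfolding z_def r_def by simp
    ultimately have "u z - B * ((1 - (lam / r)\<^sup>2) * r) \<le> u y" by simp
    then show ?thesis
      unfolding kelvin using lam r True mMB r0 uz k
      by (intro kelvin_estimate_near[of _ _ m]) (auto intro: order_trans[OF mult_left_mono[of r r0]])
  next
    case False
    then show ?thesis
      unfolding kelvin using far y(1) r lam mMB uz k r0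
      by (intro order_trans[OF kelvin_estimate_far[of lam r0 m M]]) (auto simp: r_def k_def)
  qed
qed

theorem kelvin_le_near_boundary_point:
  fixes u :: "real^'n::finite \<Rightarrow> real" and Du :: "real^'n \<Rightarrow> real^'n" and D2u :: "real^'n \<Rightarrow> real^'n^'n"
  assumes n: "CARD('n) \<ge> 3"
    and du: "\<forall>z\<in>half_space N. (u has_derivative (\<lambda>h. Du z \<bullet> h)) (at z within half_space N)"
    and d2u: "\<forall>z\<in>half_space N. (Du has_derivative (\<lambda>h. D2u z *v h)) (at z within half_space N)"
    and pos: "\<forall>z\<in>half_space N. u z > 0"
    and lap: "\<forall>z\<in>half_space N. (\<Sum>i\<in>UNIV. D2u z $ i $ i) < 0"
    and neu: "\<forall>z\<in>bdry_half_space N. Du z $ N < 0"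
    and x: "x \<in> bdry_half_space N"
  shows "\<exists>lam0>0. \<forall>lam. 0 < lam \<and> lam < lam0 \<longrightarrow>
           (\<forall>y\<in>half_space N. dist y x \<ge> lam \<longrightarrow> kelvin u x lam y \<le> u y)"
proof -
  define K where "K = half_space N \<inter> cball x 1"
  have "closed (half_space N)" "convex (half_space N)"
    unfolding half_space_def by (auto simp: closed_halfspace_component_ge_cart convex_def)
  then have K: "compact K" "convex K" "x \<in> K" "K \<subseteq> half_space N"
    using x unfolding K_def half_space_def bdry_half_space_def by (auto intro: closed_Int_compact convex_Int)
  have "continuous_on (half_space N) Du"
    using d2u by (metis continuous_on_eq_continuous_within has_derivative_continuous)
  then have "continuous_on K Du" using K(4) by (rule continuous_on_subset)
  moreover have "\<forall>z\<in>K. (u has_derivative (\<lambda>h. Du z \<bullet> h)) (at z within K)"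
    using du K(4) has_derivative_subset by blast
  moreover have "K \<noteq> {}" "\<forall>z\<in>K. u z > 0" using K(3,4) pos by auto
  ultimately obtain m M B where mMB: "0 < m" "m \<le> M" "0 < B" and bounds: "\<forall>z\<in>K. m \<le> u z \<and> u z \<le> M"
    and lip: "\<forall>a\<in>K. \<forall>b\<in>K. \<bar>u a - u b\<bar> \<le> B * dist a b"
    using bounds_on_compact_convex[OF K(1,2)] by metis
  define r0 where "r0 = min 1 (m / (2 * B))"
  have r0: "r0 > 0" "r0 \<le> 1" "2 * B * r0 \<le> m" unfolding r0_def using mMB by (auto simp: min_def field_simps)
  have "\<forall>y\<in>half_space N. dist y x \<ge> r0 \<longrightarrow> u y \<ge> m * r0 ^ (CARD('n) - 2) / dist y x ^ (CARD('n) - 2)"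
    using lower_bound_by_fundamental_solution[OF n du d2u pos lap neu x r0(1) mMB(1)] bounds r0(2)
    unfolding K_def by (simp add: dist_commute)
  then have "kelvin u x lam y \<le> u y"
    if "0 < lam" "lam \<le> r0 * (m / M)" "y \<in> half_space N" "lam \<le> dist y x" for lam y
    using kelvin_le_if_bounds[OF n x _ _ mMB r0 _ that] bounds lip unfolding K_def by blast
  moreover have "0 < r0 * (m / M)" using r0 mMB by simp
  ultimately show ?thesis by (intro exI[of _ "r0 * (m / M)"]) auto
qed

lemma lambda_bar_pos:
  assumes "lam0 > 0"
    and "\<forall>lam. 0 < lam \<and> lam < lam0 \<longrightarrow> (\<forall>y\<in>half_space N. dist y x \<ge> lam \<longrightarrow> kelvin u x lam y \<le> u y)"
  shows "lambda_bar N u x > 0"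
proof -
  have "ereal lam0 \<le> lambda_bar N u x"
    unfolding lambda_bar_def using assms by (intro Sup_upper) auto
  then show ?thesis using assms(1) by (metis ereal_less(2) order_less_le_trans)
qed

theorem lemma3p3:
  fixes u :: "real^'n \<Rightarrow> real"
    and Du :: "real^'n \<Rightarrow> real^'n"
    and D2u :: "real^'n \<Rightarrow> real^'n^'n"
    and N :: 'n and k :: nat and c0 :: real
  assumes n3: "CARD('n) \<ge> 3"
    and k: "1 \<le> k" "k \<le> CARD('n)"
    and c0: "c0 > 0"
    and C2: "C2_on (half_space N) u Du D2u"
    and pos: "\<forall>x\<in>half_space N. u x > 0"
    and eq: "\<forall>x\<in>half_space N. \<exists>lam. eig_on UNIV (\<lambda>i j. A_u u Du D2u x $ i $ j) lam
                 \<and> sigma_on UNIV k lam = 2 ^ k * real (CARD('n) choose k)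
                 \<and> Gamma_plus UNIV k lam"
    and bdry: "\<forall>x\<in>bdry_half_space N. \<exists>lamT.
                 eig_on (UNIV - {N}) (\<lambda>i j. A_u u Du D2u x $ i $ j) lamT
                 \<and> B_k k (UNIV - {N}) lamT (h_u N u Du x) = c0"
  shows "\<forall>x\<in>bdry_half_space N.
           (\<exists>lam0 > 0. \<forall>lam. 0 < lam \<and> lam < lam0 \<longrightarrow>
              (\<forall>y\<in>half_space N. dist y x \<ge> lam \<longrightarrow> kelvin u x lam y \<le> u y))
         \<and> lambda_bar N u x > 0"
proof -
  have du: "\<forall>z\<in>half_space N. (u has_derivative (\<lambda>h. Du z \<bullet> h)) (at z within half_space N)"
    and d2u: "\<forall>z\<in>half_space N. (Du has_derivative (\<lambda>h. D2u z *v h)) (at z within half_space N)"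
    using C2 unfolding C2_on_def by auto
  have lap: "\<forall>z\<in>half_space N. (\<Sum>i\<in>UNIV. D2u z $ i $ i) < 0"
    using eq pos laplacian_neg_if_Gamma_plus[OF n3 k(1)] by blast
  have neu: "\<forall>z\<in>bdry_half_space N. Du z $ N < 0"
  proof
    fix z assume z: "z \<in> bdry_half_space N"
    then have "z \<in> half_space N" unfolding half_space_def bdry_half_space_def by simp
    moreover obtain lam where "eig_on UNIV (\<lambda>i j. A_u u Du D2u z $ i $ j) lam" "Gamma_plus UNIV k lam"
      using eq \<open>z \<in> half_space N\<close> by blast
    moreover obtain mu where "eig_on (UNIV - {N}) (\<lambda>i j. A_u u Du D2u z $ i $ j) mu"
      "B_k k (UNIV - {N}) mu (h_u N u Du z) = c0"
      using bdry z by blast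
    ultimately show "Du z $ N < 0" using pos c0 normal_derivative_neg_if_B_k_pos[OF n3 k(1)] by auto
  qed
  show ?thesis
    using kelvin_le_near_boundary_point[OF n3 du d2u pos lap neu] lambda_bar_pos by blast
qed

end
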